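(* Let $r,s$ be positive integers, $1\le e<s$, and let $S\subseteq[F]^{r,s}$ be $e$-superlarge. Let $\sigma_1,\dots,\sigma_p$ be finitely many sentences of type $\Sigma_1^*(\mathrm{iv})$ such that every $c_{ij}$ occurring in them satisfies $i\le s$ and $j\le r$, and with $\iota(\sigma_1)=\dots=\iota(\sigma_p)=e'>e$. Then there is an $e'$-superlarge set $S'\subseteq S$ such that $M\models\sigma_1(\mathbf{a})\wedge\dots\wedge\sigma_p(\mathbf{a})$ for every $\mathbf{a}\in S'$.
   Context: $\mathcal{L}$ is a countable first-order language containing a binary symbol $<$; $\mathcal{L}^S$ is $\mathcal{L}$ with Skolem function symbols, $T_{\mathrm{skolem}}$ the theory saying they are Skolem functions; "term" means $\mathcal{L}^S$-term. $\theta$ is a strongly inaccessible cardinal and $M$ is a model of $T_{\mathrm{skolem}}$ whose $\mathcal{L}$-reduct is a $\theta$-like model (cardinality $\theta$, every proper initial segment of cardinality $<\theta$) of a complete $\mathcal{L}$-theory $T$ in which $<$ is a linear order. Fix a chain $\langle M_i;i<\theta\rangle$ of $\mathcal{L}^S$-elementary submodels of $M$, each a proper initial segment of $M$, with $M_j$ an elementary end extension of $M_i$ for $i<j$, $M_\delta=\bigcup_{i<\delta}M_i$ for limit $\delta$, and $M=\bigcup_{i<\theta}M_i$. $F:M\to\theta$, $F(a)=$ least $i$ with $a\in M_i$. For $X\subseteq M$, $[X]^r$ is the set of strictly increasing $r$-sequences from $X$, and $[X]^\mu$ the set of subsets of $X$ of cardinality $\mu$. $[F]^{r,s}$ is the set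 of $\mathbf{x}=\langle\mathbf{x}_1,\dots,\mathbf{x}_s\rangle$ with $\mathbf{x}_i=\langle x_{i1},\dots,x_{ir}\rangle\in[M]^r$, $F(x_{ij})=F(x_{il})$ for all $i,j,l$, and $F(x_{11})<F(x_{21})<\dots<F(x_{s1})$. For $A\subseteq M$, $[F|A]^{r,s}=\{\mathbf{x}\in[F]^{r,s}: \text{all }x_{ij}\in A\}$. Game $G(S,e)$ for $S\subseteq[F]^{r,s}$, $1\le e\le s$, $f=s-e$: for $k=1,\dots,e$, player I chooses a cardinal $\mu_k<\theta$ and then II responds; for $k<e$ II chooses an ordinal $\beta_k<\theta$, and at his last move II chooses a sequence of ordinals $\langle\beta_{e+i};i<\theta\rangle$ below $\theta$ (with $i=0$ giving $\beta_e$). II wins iff $\beta_1<\dots<\beta_e<\beta_{e+1}<\dots$ and there are $X_k\in[F^{-1}(\beta_k)]^{\mu_k}$ ($1\le k\le e$) and $X_{e+i}\subseteq F^{-1}(\beta_{e+i})$ ($1\le i<\theta$) with $\sup\{|X_{e+i}|:1\le i<\theta\}=\theta$ and $\prod_{k=1}^e[X_k]^r\times[F|\bigcup_{1\le i<\theta}X_{e+i}]^{r,f}\subseteq S$ (for $f=0$ this reads $\prod_{k=1}^e[X_k]^r\subseteq S$). $S$ is $e$-superlarge iff II has a winning strategy in $G(S,e)$. $C^*=\{c_{ij}\mid i,j<\omega\}$ are new constants. A sentence of type $\Sigma_1^*(\mathrm{iv})$ is one of the form: if $\tau(c_{i_1j_1},\dots,c_{i_nj_n})<c_{(i_n-1)j}$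 then $\tau(\bar c,c_{i_{q+1}j_{q+1}},\dots,c_{i_nj_n})=\tau(\bar c,c_{ul_1},\dots,c_{ul_{n-q}})$, where $\tau$ is a term, the constants are from $C^*$, $c_{i_1j_1},\dots,c_{i_nj_n}$ are strictly increasing lexicographically, $i_n>1$, $u\ge i_n$, $j,l_1,\dots,l_{n-q}$ arbitrary (with $c_{ul_1},\dots,c_{ul_{n-q}}$ increasing), $q$ the greatest integer with $i_q\ne i_n$ ($q=0$ if none) and $\bar c=\langle c_{i_1j_1},\dots,c_{i_qj_q}\rangle$. For such $\sigma$, $\iota(\sigma)=i_n$. For $\mathbf{a}\in[F]^{r,s}$, $M\models\sigma(\mathbf{a})$ means $\sigma$ holds in $M$ when each $c_{ij}$ occurring in $\sigma$ is replaced by $a_{ij}$. *)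

theory Defs
  imports Main "HOL-Library.Countable_Set"
begin

unbundle cardinal_syntax

text \<open>The universe of the model M is the whole type 'm; a structure is given by
  fI (functions) and pI (relations); arities are ar / par.\<close>

datatype ('f,'v) trm = V 'v | Fn 'f "('f,'v) trm list"

datatype ('f,'p) fm = Eq "('f,nat) trm" "('f,nat) trm" | Rel 'p "('f,nat) trm list"
  | Neg "('f,'p) fm" | Conj "('f,'p) fm" "('f,'p) fm" | Ex nat "('f,'p) fm"

fun tval :: "('f \<Rightarrow> 'm list \<Rightarrow> 'm) \<Rightarrow> ('v \<Rightarrow> 'm) \<Rightarrow> ('f,'v) trm \<Rightarrow> 'm" where
  "tval fI v (V x) = v x"
| "tval fI v (Fn f ts) = fI f (map (tval fI v) ts)"

fun tvars :: "('f,'v) trm \<Rightarrow> 'v set" where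
  "tvars (V x) = {x}"
| "tvars (Fn f ts) = (\<Union>t\<in>set ts. tvars t)"

fun twf :: "('f \<Rightarrow> nat) \<Rightarrow> ('f \<Rightarrow> bool) \<Rightarrow> ('f,'v) trm \<Rightarrow> bool" where
  "twf ar P (V x) = True"
| "twf ar P (Fn f ts) = (P f \<and> length ts = ar f \<and> (\<forall>t\<in>set ts. twf ar P t))"

fun fwf :: "('f \<Rightarrow> nat) \<Rightarrow> ('p \<Rightarrow> nat) \<Rightarrow> ('f \<Rightarrow> bool) \<Rightarrow> ('f,'p) fm \<Rightarrow> bool" where
  "fwf ar par P (Eq t1 t2) = (twf ar P t1 \<and> twf ar P t2)"
| "fwf ar par P (Rel p ts) = (length ts = par p \<and> (\<forall>t\<in>set ts. twf ar P t))"
| "fwf ar par P (Neg \<phi>) = fwf ar par P \<phi>"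
| "fwf ar par P (Conj \<phi> \<psi>) = (fwf ar par P \<phi> \<and> fwf ar par P \<psi>)"
| "fwf ar par P (Ex x \<phi>) = fwf ar par P \<phi>"

fun fvars :: "('f,'p) fm \<Rightarrow> nat set" where
  "fvars (Eq t1 t2) = tvars t1 \<union> tvars t2"
| "fvars (Rel p ts) = (\<Union>t\<in>set ts. tvars t)"
| "fvars (Neg \<phi>) = fvars \<phi>"
| "fvars (Conj \<phi> \<psi>) = fvars \<phi> \<union> fvars \<psi>"
| "fvars (Ex x \<phi>) = fvars \<phi> - {x}"

text \<open>satisfaction in the substructure with domain D (quantifiers range over D)\<close>
fun sat :: "('f \<Rightarrow> 'm list \<Rightarrow> 'm) \<Rightarrow> ('p \<Rightarrow> 'm list \<Rightarrow> bool) \<Rightarrow> 'm set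
            \<Rightarrow> (nat \<Rightarrow> 'm) \<Rightarrow> ('f,'p) fm \<Rightarrow> bool" where
  "sat fI pI D v (Eq t1 t2) = (tval fI v t1 = tval fI v t2)"
| "sat fI pI D v (Rel p ts) = pI p (map (tval fI v) ts)"
| "sat fI pI D v (Neg \<phi>) = (\<not> sat fI pI D v \<phi>)"
| "sat fI pI D v (Conj \<phi> \<psi>) = (sat fI pI D v \<phi> \<and> sat fI pI D v \<psi>)"
| "sat fI pI D v (Ex x \<phi>) = (\<exists>a\<in>D. sat fI pI D (v(x := a)) \<phi>)"

text \<open>N is (the domain of) an L^S-elementary substructure of N' (both substructures of M)\<close>
definition elem_in :: "('f \<Rightarrow> nat) \<Rightarrow> ('p \<Rightarrow> nat) \<Rightarrow> ('f \<Rightarrow> 'm list \<Rightarrow> 'm)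
     \<Rightarrow> ('p \<Rightarrow> 'm list \<Rightarrow> bool) \<Rightarrow> 'm set \<Rightarrow> 'm set \<Rightarrow> bool" where
  "elem_in ar par fI pI N N' \<longleftrightarrow> N \<noteq> {} \<and> N \<subseteq> N' \<and>
     (\<forall>f xs. set xs \<subseteq> N \<and> length xs = ar f \<longrightarrow> fI f xs \<in> N) \<and>
     (\<forall>\<phi> v. fwf ar par (\<lambda>_. True) \<phi> \<and> range v \<subseteq> N \<longrightarrow>
        (sat fI pI N v \<phi> \<longleftrightarrow> sat fI pI N' v \<phi>))"

text \<open>The strongly inaccessible cardinal \<theta> is represented by a well-ordered type 'k of
  order type \<theta>: the elements of 'k are the ordinals below \<theta>.\<close>
definition theta_inaccessible :: "'k::wellorder itself \<Rightarrow> bool" where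
  "theta_inaccessible _ \<longleftrightarrow>
     (\<forall>m::'k. (card_of ({x. x < m})) <o (card_of (UNIV::'k set))) \<and>
     (card_of (UNIV::nat set)) <o (card_of (UNIV::'k set)) \<and>
     (\<forall>A::'k set. (card_of (A)) <o (card_of (UNIV::'k set)) \<longrightarrow> (\<exists>m. \<forall>x\<in>A. x < m)) \<and>
     (\<forall>m::'k. (card_of (Pow {x. x < m})) <o (card_of (UNIV::'k set)))"

definition kzero :: "'k::wellorder" where "kzero = (LEAST x. True)"

definition is_limit :: "'k::wellorder \<Rightarrow> bool" where
  "is_limit d \<longleftrightarrow> (\<exists>i. i < d) \<and> (\<forall>i<d. \<exists>j. i < j \<and> j < d)"

definition Lformula :: "('f \<Rightarrow> nat) \<Rightarrow> ('p \<Rightarrow> nat) \<Rightarrow> ('f \<Rightarrow> bool) \<Rightarrow> ('f,'p) fm \<Rightarrow> bool" where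
  "Lformula ar par isL \<phi> \<longleftrightarrow> fwf ar par isL \<phi>"

definition lessM :: "('p \<Rightarrow> 'm list \<Rightarrow> bool) \<Rightarrow> 'p \<Rightarrow> 'm \<Rightarrow> 'm \<Rightarrow> bool" where
  "lessM pI lt a b \<longleftrightarrow> pI lt [a, b]"

definition downclosed :: "('m \<Rightarrow> 'm \<Rightarrow> bool) \<Rightarrow> 'm set \<Rightarrow> bool" where
  "downclosed lss I \<longleftrightarrow> (\<forall>a\<in>I. \<forall>b. lss b a \<longrightarrow> b \<in> I)"

text \<open>All standing assumptions: countable L (function symbols isL, all relation symbols),
  binary symbol lt; L^S = L plus one Skolem symbol sk \<phi> n for each L-formula \<phi> with
  free variables among 0..n (witness variable 0, parameters 1..n); M |= T_skolem;
  the L-reduct is \<theta>-like with < a linear order; the elementary chain Mi.\<close>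
definition setting :: "('f \<Rightarrow> nat) \<Rightarrow> ('p \<Rightarrow> nat) \<Rightarrow> ('f \<Rightarrow> bool)
   \<Rightarrow> (('f,'p) fm \<Rightarrow> nat \<Rightarrow> 'f) \<Rightarrow> 'p \<Rightarrow> ('f \<Rightarrow> 'm list \<Rightarrow> 'm) \<Rightarrow> ('p \<Rightarrow> 'm list \<Rightarrow> bool)
   \<Rightarrow> ('k::wellorder \<Rightarrow> 'm set) \<Rightarrow> bool" where
  "setting ar par isL sk lt fI pI Mi \<longleftrightarrow>
     theta_inaccessible TYPE('k) \<and>
     countable {f. isL f} \<and> countable (UNIV::'p set) \<and> par lt = 2 \<and>
     (\<forall>\<phi> n. Lformula ar par isL \<phi> \<and> fvars \<phi> \<subseteq> {0..n} \<longrightarrow>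
        \<not> isL (sk \<phi> n) \<and> ar (sk \<phi> n) = n \<and>
        (\<forall>v. (\<exists>a. sat fI pI UNIV (v(0 := a)) \<phi>) \<longrightarrow>
             sat fI pI UNIV (v(0 := fI (sk \<phi> n) (map v [1..<Suc n]))) \<phi>)) \<and>
     inj_on (\<lambda>(\<phi>, n). sk \<phi> n) {(\<phi>, n). Lformula ar par isL \<phi> \<and> fvars \<phi> \<subseteq> {0..n}} \<and>
     (\<forall>f. \<not> isL f \<longrightarrow> (\<exists>\<phi> n. Lformula ar par isL \<phi> \<and> fvars \<phi> \<subseteq> {0..n} \<and> f = sk \<phi> n)) \<and>
     (\<forall>a. \<not> lessM pI lt a a) \<and>
     (\<forall>a b c. lessM pI lt a b \<and> lessM pI lt b c \<longrightarrow> lessM pI lt a c) \<and>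
     (\<forall>a b. lessM pI lt a b \<or> a = b \<or> lessM pI lt b a) \<and>
     (card_of (UNIV::'m set)) =o (card_of (UNIV::'k set)) \<and>
     (\<forall>I. I \<noteq> UNIV \<and> downclosed (lessM pI lt) I \<longrightarrow> (card_of (I)) <o (card_of (UNIV::'k set))) \<and>
     (\<forall>i. elem_in ar par fI pI (Mi i) UNIV) \<and>
     (\<forall>i. Mi i \<noteq> UNIV \<and> downclosed (lessM pI lt) (Mi i)) \<and>
     (\<forall>i j. i < j \<longrightarrow> elem_in ar par fI pI (Mi i) (Mi j) \<and>
            (\<forall>a\<in>Mi i. \<forall>b\<in>Mi j - Mi i. lessM pI lt a b)) \<and>
     (\<forall>d. is_limit d \<longrightarrow> Mi d = (\<Union>i\<in>{i. i < d}. Mi i)) \<and>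
     (\<Union>i. Mi i) = UNIV"

definition Fk :: "('k::wellorder \<Rightarrow> 'm set) \<Rightarrow> 'm \<Rightarrow> 'k" where
  "Fk Mi a = (LEAST i. a \<in> Mi i)"

definition incr :: "('m \<Rightarrow> 'm \<Rightarrow> bool) \<Rightarrow> nat \<Rightarrow> 'm set \<Rightarrow> 'm list set" where
  "incr lss r X = {xs. length xs = r \<and> set xs \<subseteq> X \<and> sorted_wrt lss xs}"

text \<open>[F|A]^{r,s}; [F]^{r,s} is Fseqs lss F r s UNIV.  An element is a list of s blocks,
  block i (0-based) being the list x_{i+1,1},...,x_{i+1,r}.\<close>
definition Fseqs :: "('m \<Rightarrow> 'm \<Rightarrow> bool) \<Rightarrow> ('m \<Rightarrow> 'k::wellorder) \<Rightarrow> nat \<Rightarrow> nat \<Rightarrow> 'm set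
     \<Rightarrow> 'm list list set" where
  "Fseqs lss F r s A = {x. length x = s \<and>
      (\<forall>b\<in>set x. b \<in> incr lss r A \<and> (\<forall>y\<in>set b. F y = F (hd b))) \<and>
      sorted_wrt (\<lambda>b c. F (hd b) < F (hd c)) x}"

text \<open>Player I's moves are cardinals
  below \<theta>, each represented by an ordinal m < \<theta> standing for the cardinal |{x. x < m}|
  (mus ! k is \<mu>_(k+1)).  beta k is \<beta>_(k+1) for k < e, and T is II's last move,
  T kzero = \<beta>_e and T i = \<beta>_(e+i) for i \<noteq> 0.\<close>
definition game_win :: "('m \<Rightarrow> 'm \<Rightarrow> bool) \<Rightarrow> ('m \<Rightarrow> 'k::wellorder) \<Rightarrow> nat \<Rightarrow> nat \<Rightarrow> nat
     \<Rightarrow> 'm list list set \<Rightarrow> 'k list \<Rightarrow> (nat \<Rightarrow> 'k) \<Rightarrow> ('k \<Rightarrow> 'k) \<Rightarrow> bool" where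
  "game_win lss F r s e S mus beta T \<longleftrightarrow>
     (\<forall>k. Suc k < e \<longrightarrow> beta k < beta (Suc k)) \<and> beta (e - 1) = T kzero \<and> strict_mono T \<and>
     (\<exists>X Y.
        (\<forall>k<e. X k \<subseteq> {a. F a = beta k} \<and> (card_of (X k)) =o (card_of ({x. x < mus ! k}))) \<and>
        (\<forall>i. i \<noteq> kzero \<longrightarrow> Y i \<subseteq> {a. F a = T i}) \<and>
        (\<forall>m::'k. \<exists>i. i \<noteq> kzero \<and> (card_of ({x. x < m})) \<le>o (card_of (Y i))) \<and>
        {xs @ ys | xs ys. length xs = e \<and> (\<forall>k<e. xs ! k \<in> incr lss r (X k)) \<and>
            ys \<in> Fseqs lss F r (s - e) (\<Union>i\<in>{i. i \<noteq> kzero}. Y i)} \<subseteq> S)"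

text \<open>II has a winning strategy: st gives \<beta>_k (k<e) from \<mu>_1..\<mu>_k, fin gives the final
  sequence from \<mu>_1..\<mu>_e.\<close>
definition II_wins :: "('m \<Rightarrow> 'm \<Rightarrow> bool) \<Rightarrow> ('m \<Rightarrow> 'k::wellorder) \<Rightarrow> nat \<Rightarrow> nat \<Rightarrow> nat
     \<Rightarrow> 'm list list set \<Rightarrow> bool" where
  "II_wins lss F r s e S \<longleftrightarrow>
     (\<exists>st fin. \<forall>mus. length mus = e \<longrightarrow>
        game_win lss F r s e S mus
          (\<lambda>k. if Suc k < e then st (take (Suc k) mus) else fin mus kzero) (fin mus))"

definition superlarge :: "('m \<Rightarrow> 'm \<Rightarrow> bool) \<Rightarrow> ('m \<Rightarrow> 'k::wellorder) \<Rightarrow> nat \<Rightarrow> nat \<Rightarrow> nat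
     \<Rightarrow> 'm list list set \<Rightarrow> bool" where
  "superlarge lss F r s e S \<longleftrightarrow>
     S \<subseteq> Fseqs lss F r s UNIV \<and> 1 \<le> e \<and> e \<le> s \<and> II_wins lss F r s e S"

text \<open>A sentence is (\<tau>, cs, j, u, ls): \<tau> a term in variables 0..n-1 (variable k stands for the
  k-th constant argument), cs = [(i_1,j_1),...,(i_n,j_n)] the constants c_{i_1 j_1},...,
  ls = [l_1,...,l_{n-q}].\<close>
type_synonym 'f sent = "('f,nat) trm \<times> (nat \<times> nat) list \<times> nat \<times> nat \<times> nat list"

definition lexless :: "nat \<times> nat \<Rightarrow> nat \<times> nat \<Rightarrow> bool" where
  "lexless p p' \<longleftrightarrow> fst p < fst p' \<or> (fst p = fst p' \<and> snd p < snd p')"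

text \<open>q (1-based): greatest q with i_q \<noteq> i_n, 0 if none\<close>
definition qidx :: "(nat \<times> nat) list \<Rightarrow> nat" where
  "qidx cs = (if \<exists>k<length cs. fst (cs ! k) \<noteq> fst (last cs)
              then Suc (GREATEST k. k < length cs \<and> fst (cs ! k) \<noteq> fst (last cs)) else 0)"

definition is_sigma :: "('f \<Rightarrow> nat) \<Rightarrow> 'f sent \<Rightarrow> bool" where
  "is_sigma ar \<sigma> = (case \<sigma> of (\<tau>, cs, j, u, ls) \<Rightarrow>
     cs \<noteq> [] \<and> twf ar (\<lambda>_. True) \<tau> \<and> tvars \<tau> \<subseteq> {..<length cs} \<and>
     sorted_wrt lexless cs \<and> fst (last cs) > 1 \<and> u \<ge> fst (last cs) \<and>
     length ls = length cs - qidx cs \<and> sorted_wrt (<) ls)"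

definition iota :: "'f sent \<Rightarrow> nat" where
  "iota \<sigma> = (case \<sigma> of (\<tau>, cs, j, u, ls) \<Rightarrow> fst (last cs))"

definition sconsts :: "'f sent \<Rightarrow> (nat \<times> nat) set" where
  "sconsts \<sigma> = (case \<sigma> of (\<tau>, cs, j, u, ls) \<Rightarrow>
     set cs \<union> {(fst (last cs) - 1, j)} \<union> (\<lambda>l. (u, l)) ` set ls)"

text \<open>a_{ij} for a in [F]^{r,s} (indices 1-based as in the paper)\<close>
definition aval :: "'m list list \<Rightarrow> nat \<times> nat \<Rightarrow> 'm" where
  "aval a c = a ! (fst c - 1) ! (snd c - 1)"

definition holds :: "('f \<Rightarrow> 'm list \<Rightarrow> 'm) \<Rightarrow> ('m \<Rightarrow> 'm \<Rightarrow> bool) \<Rightarrow> 'm list list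
     \<Rightarrow> 'f sent \<Rightarrow> bool" where
  "holds fI lss a \<sigma> = (case \<sigma> of (\<tau>, cs, j, u, ls) \<Rightarrow>
     (let lhs = tval fI (\<lambda>k. aval a (cs ! k)) \<tau>;
          cs' = take (qidx cs) cs @ map (\<lambda>l. (u, l)) ls
      in lss lhs (aval a (fst (last cs) - 1, j)) \<longrightarrow>
         lhs = tval fI (\<lambda>k. aval a (cs' ! k)) \<tau>))"

end

theory Submission
  imports Defs "HOL-Library.Ramsey"
begin

text \<open>Player II's winning strategy in \<open>G(S, e)\<close> is turned into one in \<open>G(S', e')\<close>, where
  \<open>S'\<close> is the part of \<open>S\<close> satisfying the sentences.  After I's first \<open>e\<close> moves the old strategy
  supplies levels and a tail of levels carrying sets of unbounded size; II answers the moves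
  \<open>e + 1, \<dots>, e' - 1\<close> with levels from that tail.  For the last move every sentence \<open>\<sigma>\<close>
  colours the \<open>m\<close>-sets \<open>z\<close> of a level by recording, for each prefix \<open>p\<close> of the first
  \<open>e' - 1\<close> blocks, the value \<open>\<tau>(p, z)\<close> whenever it lies below the bound \<open>c\<^sub>(\<^sub>e\<^sub>'\<^sub>-\<^sub>1\<^sub>)\<^sub>j\<close>.
  As \<open>\<theta>\<close> is inaccessible there are fewer than \<open>\<theta>\<close> colours, so the Erd\H{o}s--Rado theorem
  below \<open>\<theta>\<close> and a pigeonhole over the tail give cofinally many levels with large sets on
  which all colourings are constant with the same colours.  For points taken from such sets
  the two sides of \<open>\<sigma>\<close> receive the same colour, so they are equal whenever the left-hand side
  lies below the bound.\<close>

section \<open>Sets of size below \<open>\<theta>\<close>\<close>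

definition small_below :: "'k::wellorder itself \<Rightarrow> 'a set \<Rightarrow> bool" where
  "small_below t X \<longleftrightarrow> |X| <o |UNIV::'k set|"

lemma kzero_le: "kzero \<le> (x::'k::wellorder)"
  unfolding kzero_def by (rule Least_le) simp

lemma lessThan_kzero: "{..<kzero} = ({}::'k::wellorder set)"
  using kzero_le leD by auto

locale inaccessible =
  fixes tk :: "'k::wellorder itself"
  assumes theta_inaccessible: "theta_inaccessible tk"
begin

abbreviation small :: "'a set \<Rightarrow> bool" where
  "small \<equiv> small_below tk"

lemma small_lessThan: "small {..<m::'k}"
  using theta_inaccessible by (simp add: theta_inaccessible_def small_below_def lessThan_def)

lemma nat_ordLess_theta: "|UNIV::nat set| <o |UNIV::'k set|"
  using theta_inaccessible by (simp add: theta_inaccessible_def)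

lemma small_bounded:
  assumes "small (X::'k set)"
  shows "\<exists>m. X \<subseteq> {..<m}"
proof -
  obtain m where "\<forall>x\<in>X. x < m"
    using theta_inaccessible assms unfolding theta_inaccessible_def small_below_def by blast
  thus ?thesis by auto
qed

lemma small_Pow_lessThan: "small (Pow {..<m::'k})"
  using theta_inaccessible by (simp add: theta_inaccessible_def small_below_def lessThan_def)

lemma small_ordLeq: "|X| \<le>o |Y| \<Longrightarrow> small Y \<Longrightarrow> small X"
  unfolding small_below_def using ordLeq_ordLess_trans by blast

lemma small_subset: "X \<subseteq> Y \<Longrightarrow> small Y \<Longrightarrow> small X"
  using small_ordLeq card_of_mono1 by blast

lemma small_image: "small X \<Longrightarrow> small (f ` X)"
  using small_ordLeq card_of_image by blast

lemma small_ordLeq_lessThan: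
  assumes "small X"
  shows "\<exists>m. |X| \<le>o |{..<m::'k}|"
proof -
  have "|X| \<le>o |UNIV::'k set|"
    using assms by (simp add: small_below_def ordLess_imp_ordLeq)
  then obtain f where f: "inj_on f X" "f ` X \<subseteq> (UNIV::'k set)"
    unfolding card_of_ordLeq[symmetric] by (elim exE conjE)
  obtain m where "f ` X \<subseteq> {..<m}"
    using small_bounded[OF small_image[OF assms]] by blast
  with f have "|X| \<le>o |{..<m}|"
    by (intro card_of_ordLeqI) auto
  thus ?thesis ..
qed

lemma small_finite:
  assumes "finite X"
  shows "small X"
proof -
  have "|X| <o natLeq"
    using assms finite_iff_ordLess_natLeq by blast
  hence "|X| <o |UNIV::nat set|"
    using ordIso_symmetric[OF card_of_nat] by (rule ordLess_ordIso_trans)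
  thus ?thesis
    unfolding small_below_def using nat_ordLess_theta by (rule ordLess_transitive)
qed

lemma not_small_UNIV: "\<not> small (UNIV::'k set)"
  by (simp add: small_below_def ordLess_irreflexive)

lemma exists_not_kzero: "\<exists>i::'k. i \<noteq> kzero"
proof (rule ccontr)
  assume "\<nexists>i::'k. i \<noteq> kzero"
  hence "UNIV = {kzero::'k}" by auto
  moreover have "small {kzero::'k}" by (rule small_finite) simp
  ultimately show False using not_small_UNIV by simp
qed

lemma lessThan_ordLeq_mono: "(a::'k) \<le> b \<Longrightarrow> |{..<a}| \<le>o |{..<b}|"
  by (rule card_of_mono1) auto

lemma small_Pow:
  assumes "small X"
  shows "small (Pow X)"
proof -
  obtain m where "|X| \<le>o |{..<m::'k}|"
    using small_ordLeq_lessThan[OF assms] by blast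
  then obtain f where f: "inj_on f X" "f ` X \<subseteq> {..<m}"
    unfolding card_of_ordLeq[symmetric] by (elim exE conjE)
  have "|Pow X| \<le>o |Pow {..<m}|"
  proof (rule card_of_ordLeqI[of "image f"])
    show "inj_on (image f) (Pow X)" using f(1) by (rule inj_on_image_Pow)
  qed (use f(2) in blast)
  thus ?thesis using small_Pow_lessThan by (rule small_ordLeq)
qed

lemma small_Times:
  assumes "small X" "small Y"
  shows "small (X \<times> Y)"
proof -
  obtain a b where "|X| \<le>o |{..<a::'k}|" "|Y| \<le>o |{..<b::'k}|"
    using small_ordLeq_lessThan assms by meson
  hence "|X| \<le>o |{..<max a b}|" "|Y| \<le>o |{..<max a b}|"
    by (auto elim!: ordLeq_transitive intro: lessThan_ordLeq_mono)
  hence XY: "|X \<times> Y| \<le>o |{..<max a b} \<times> {..<max a b}|"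
    by (rule ordLeq_transitive[OF card_of_Times_mono1 card_of_Times_mono2])
  have "small ({..<max a b} \<times> {..<max a b})"
  proof (cases "finite {..<max a b}")
    case False
    hence "|{..<max a b} \<times> {..<max a b}| \<le>o |{..<max a b}|"
      by (simp add: card_of_Times_same_infinite ordIso_imp_ordLeq)
    thus ?thesis using small_lessThan by (rule small_ordLeq)
  qed (simp add: small_finite)
  with XY show ?thesis by (rule small_ordLeq)
qed

lemma small_UN:
  assumes "small I" "\<forall>i\<in>I. small (B i)"
  shows "small (\<Union>i\<in>I. B i)"
proof -
  have "\<forall>i\<in>I. \<exists>b. |B i| \<le>o |{..<b::'k}|"
    using assms(2) small_ordLeq_lessThan by blast
  then obtain g where g: "\<forall>i\<in>I. |B i| \<le>o |{..<g i::'k}|"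
    by (rule bchoice[THEN exE])
  obtain m where m: "g ` I \<subseteq> {..<m}"
    using small_bounded[OF small_image[OF assms(1)]] by blast
  have "\<forall>i\<in>I. |B i| \<le>o |{..<m}|"
  proof
    fix i assume "i \<in> I"
    hence "g i \<le> m" using m by auto
    thus "|B i| \<le>o |{..<m}|"
      using g \<open>i \<in> I\<close> ordLeq_transitive lessThan_ordLeq_mono by metis
  qed
  hence "|SIGMA i:I. B i| \<le>o |I \<times> {..<m}|"
    by (rule card_of_Sigma_mono1)
  hence "|\<Union>i\<in>I. B i| \<le>o |I \<times> {..<m}|"
    by (rule ordLeq_transitive[OF card_of_UNION_Sigma])
  moreover have "small (I \<times> {..<m})"
    using assms(1) small_lessThan by (rule small_Times)
  ultimately show ?thesis by (rule small_ordLeq)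
qed

lemma small_lists:
  assumes "small X"
  shows "small {xs. length xs = n \<and> set xs \<subseteq> X}"
proof (induction n)
  case 0
  show ?case by (rule small_subset[OF _ small_finite[of "{[]}"]]) auto
next
  case (Suc n)
  have "{xs. length xs = Suc n \<and> set xs \<subseteq> X}
        \<subseteq> case_prod Cons ` (X \<times> {xs. length xs = n \<and> set xs \<subseteq> X})"
    by (auto simp: length_Suc_conv)
  thus ?case
    using small_image[OF small_Times[OF assms Suc]] by (rule small_subset)
qed

lemma small_ordLess_lessThan:
  assumes "small X"
  shows "\<exists>\<nu>. |X| <o |{..<\<nu>::'k}|"
proof -
  obtain b where "|Pow X| \<le>o |{..<b::'k}|"
    using small_ordLeq_lessThan[OF small_Pow[OF assms]] by blast
  hence "|X| <o |{..<b}|" by (rule ordLess_ordLeq_trans[OF card_of_Pow])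
  thus ?thesis ..
qed

lemma small_partial_funs:
  assumes "small A" "small B"
  shows "small {f. \<forall>p. f p \<noteq> None \<longrightarrow> p \<in> A \<and> the (f p) \<in> B}" (is "small ?C")
proof -
  let ?graph = "\<lambda>f. {(p, v). f p = Some v}"
  have "inj_on ?graph ?C"
  proof (rule inj_onI, rule ext)
    fix f g p assume "?graph f = ?graph g"
    hence "\<forall>v. f p = Some v \<longleftrightarrow> g p = Some v" by (auto simp: set_eq_iff)
    thus "f p = g p" by (metis option.exhaust)
  qed
  moreover have "?graph ` ?C \<subseteq> Pow (A \<times> B)" by force
  ultimately have "|?C| \<le>o |Pow (A \<times> B)|"
    by (intro card_of_ordLeqI) auto
  moreover have "small (Pow (A \<times> B))" by (intro small_Pow small_Times assms)
  ultimately show ?thesis by (rule small_ordLeq)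
qed

end

lemma ordLeq_imp_ordIso_subset:
  assumes "|A| \<le>o |H|"
  shows "\<exists>Z\<subseteq>H. |Z| =o |A|"
proof -
  obtain f where "inj_on f A" "f ` A \<subseteq> H"
    using assms unfolding card_of_ordLeq[symmetric] by (elim exE conjE)
  hence "|A| =o |f ` A|" by (blast intro: card_of_ordIsoI inj_on_imp_bij_betw)
  thus ?thesis using \<open>f ` A \<subseteq> H\<close> ordIso_symmetric by blast
qed

section \<open>The Erd\H{o}s--Rado theorem below \<open>\<theta>\<close>\<close>

definition worec :: "(('k::wellorder \<Rightarrow> 'a) \<Rightarrow> 'k \<Rightarrow> 'a) \<Rightarrow> 'k \<Rightarrow> 'a" where
  "worec H = wfrec {(x, y). x < y} H"

lemma worec_unfold:
  assumes "\<And>f g x. (\<And>y. y < x \<Longrightarrow> f y = g y) \<Longrightarrow> H f x = H g x"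
  shows "worec H x = H (worec H) x"
proof -
  have "worec H x = H (cut (worec H) {(x, y). x < y} x) x"
    unfolding worec_def by (rule wfrec[OF wf])
  also have "\<dots> = H (worec H) x"
    by (rule assms) (simp add: cut_apply)
  finally show ?thesis .
qed

definition homogeneous :: "('a set \<Rightarrow> 'c) \<Rightarrow> nat \<Rightarrow> 'a set \<Rightarrow> bool" where
  "homogeneous c m H \<longleftrightarrow> (\<forall>t\<in>[H]\<^bsup>m\<^esup>. \<forall>t'\<in>[H]\<^bsup>m\<^esup>. c t = c t')"

lemma homogeneous_subset: "homogeneous c m H \<Longrightarrow> H' \<subseteq> H \<Longrightarrow> homogeneous c m H'"
  unfolding homogeneous_def using nsets_mono by blast

text \<open>The path of \<open>y\<close> chooses at each stage a new point
  of \<open>A\<close> that colours every \<open>m\<close>-set of earlier path points the way \<open>y\<close> does; \<open>y\<close> itself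
  remains a candidate until it appears on its own path.\<close>

definition er_candidate :: "'a set \<Rightarrow> ('a set \<Rightarrow> 'c) \<Rightarrow> nat \<Rightarrow> 'a \<Rightarrow> 'a set \<Rightarrow> 'a \<Rightarrow> bool" where
  "er_candidate A c m y C z \<longleftrightarrow> z \<in> A \<and> z \<notin> C \<and> (\<forall>t\<in>[C]\<^bsup>m\<^esup>. c (insert z t) = c (insert y t))"

definition er_path :: "'a set \<Rightarrow> ('a set \<Rightarrow> 'c) \<Rightarrow> nat \<Rightarrow> 'a \<Rightarrow> 'k::wellorder \<Rightarrow> 'a" where
  "er_path A c m y = worec (\<lambda>p \<xi>. SOME z. er_candidate A c m y (p ` {..<\<xi>}) z)"

lemma er_path_unfold:
  "er_path A c m y \<xi> = (SOME z. er_candidate A c m y (er_path A c m y ` {..<\<xi>}) z)"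
  unfolding er_path_def by (rule worec_unfold) (metis image_cong lessThan_iff)

lemma er_path_long:
  fixes a :: "'k::wellorder"
  assumes y: "y \<in> A" "y \<notin> er_path A c m y ` {..<a}"
  defines "E \<equiv> er_path A c m y ` {..<a}"
  shows "E \<subseteq> A" and "inj_on (er_path A c m y) {..<a}"
    and "\<And>u. u \<in> [E]\<^bsup>Suc m\<^esup> \<Longrightarrow> \<exists>t\<in>[u]\<^bsup>m\<^esup>. c u = c (insert y t)"
proof -
  let ?s = "er_path A c m y"
  have cand: "er_candidate A c m y (?s ` {..<\<xi>}) (?s \<xi>)" if "\<xi> < a" for \<xi>
  proof -
    have "er_candidate A c m y (?s ` {..<\<xi>}) y"
      using y that unfolding er_candidate_def by auto
    thus ?thesis unfolding er_path_unfold[of A c m y \<xi>] by (rule someI)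
  qed
  show "E \<subseteq> A" unfolding E_def using cand by (auto simp: er_candidate_def)
  show inj: "inj_on ?s {..<a}"
  proof (rule linorder_inj_onI)
    fix \<xi> \<eta> assume "\<xi> < \<eta>" "\<eta> \<in> {..<a}"
    hence "?s \<xi> \<in> ?s ` {..<\<eta>}" "?s \<eta> \<notin> ?s ` {..<\<eta>}"
      using cand[of \<eta>] by (auto simp: er_candidate_def)
    thus "?s \<xi> \<noteq> ?s \<eta>" by metis
  qed (metis linear)
  fix u assume u: "u \<in> [E]\<^bsup>Suc m\<^esup>"
  hence fin: "finite u" "card u = Suc m" "u \<subseteq> E" by (auto simp: nsets_def)
  define I where "I = {\<xi>. \<xi> < a \<and> ?s \<xi> \<in> u}"
  have sI: "?s ` I = u" using fin(3) unfolding I_def E_def by auto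
  have "inj_on ?s I" using inj by (rule inj_on_subset) (auto simp: I_def)
  hence "finite I" using finite_imageD[of ?s I] sI fin(1) by simp
  moreover have "I \<noteq> {}" using sI fin(2) by auto
  ultimately have "Max I \<in> I" and below: "\<And>\<eta>. \<eta> \<in> I \<Longrightarrow> \<eta> \<le> Max I" by auto
  hence top: "Max I < a" "?s (Max I) \<in> u" unfolding I_def by auto
  define t where "t = u - {?s (Max I)}"
  have "t \<subseteq> ?s ` {..<Max I}"
  proof
    fix z assume "z \<in> t"
    then obtain \<eta> where "\<eta> \<in> I" "z = ?s \<eta>" "\<eta> \<noteq> Max I"
      unfolding t_def using sI by auto
    thus "z \<in> ?s ` {..<Max I}" using below[of \<eta>] by auto
  qed
  moreover have t: "t \<in> [u]\<^bsup>m\<^esup>" using fin top(2) unfolding t_def nsets_def by auto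
  ultimately have "t \<in> [?s ` {..<Max I}]\<^bsup>m\<^esup>" by (simp add: nsets_def)
  hence "c (insert (?s (Max I)) t) = c (insert y t)"
    using cand[OF top(1)] by (simp add: er_candidate_def)
  moreover have "insert (?s (Max I)) t = u" using top(2) unfolding t_def by auto
  ultimately have "c u = c (insert y t)" by simp
  with t show "\<exists>t\<in>[u]\<^bsup>m\<^esup>. c u = c (insert y t)" ..
qed

lemma er_path_agree:
  fixes \<xi> :: "'k::wellorder"
  assumes "\<forall>T\<subseteq>{..<\<xi>}. finite (er_path A c m y ` T) \<and> card (er_path A c m y ` T) = m \<longrightarrow>
             c (insert y (er_path A c m y ` T)) = c (insert y' (er_path A c m y' ` T))"
  shows "\<eta> \<le> \<xi> \<Longrightarrow> er_path A c m y \<eta> = er_path A c m y' \<eta>"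
proof (induction \<eta> rule: less_induct)
  case (less \<eta>)
  let ?s = "er_path A c m y" and ?s' = "er_path A c m y'"
  have IH: "?s \<zeta> = ?s' \<zeta>" if "\<zeta> < \<eta>" for \<zeta>
    using less that by simp
  define C where "C = ?s ` {..<\<eta>}"
  have C': "?s' ` {..<\<eta>} = C"
    unfolding C_def by (rule image_cong[OF refl]) (simp add: IH)
  have "c (insert y t) = c (insert y' t)" if t: "t \<in> [C]\<^bsup>m\<^esup>" for t
  proof -
    define T where "T = {\<zeta>. \<zeta> < \<eta> \<and> ?s \<zeta> \<in> t}"
    have "t \<subseteq> C" using t by (simp add: nsets_def)
    hence sT: "?s ` T = t" unfolding T_def C_def by auto
    have sT': "?s' ` T = t"
      unfolding sT[symmetric] by (rule image_cong[OF refl]) (simp add: T_def IH)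
    have "T \<subseteq> {..<\<xi>}" unfolding T_def using less.prems by (auto intro: less_le_trans)
    moreover have "finite (?s ` T) \<and> card (?s ` T) = m" using t sT by (simp add: nsets_def)
    ultimately have "c (insert y (?s ` T)) = c (insert y' (?s' ` T))"
      using assms by blast
    thus ?thesis using sT sT' by simp
  qed
  hence "er_candidate A c m y C = er_candidate A c m y' C"
    unfolding er_candidate_def by auto
  thus ?case
    unfolding er_path_unfold[of A c m y \<eta>] er_path_unfold[of A c m y' \<eta>] C' C_def[symmetric] by simp
qed

lemma er_paths_short_ordLeq:
  fixes a \<kappa> :: "'k::wellorder"
  assumes short: "\<forall>y\<in>A. y \<in> er_path A c m y ` {..<a}"
    and colours: "|range c| \<le>o |{..<\<kappa>}|"
  shows "|A| \<le>o |{..<a} \<times> {f. \<forall>T. f T \<noteq> None \<longrightarrow> T \<in> Pow {..<a} \<and> the (f T) \<in> {..<\<kappa>}}|"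
proof -
  let ?s = "er_path A c m"
  obtain g where g: "inj_on g (range c)" "g ` range c \<subseteq> {..<\<kappa>}"
    using colours unfolding card_of_ordLeq[symmetric] by (elim exE conjE)
  define ht where "ht y = (SOME \<eta>. \<eta> < a \<and> ?s y \<eta> = y)" for y
  have ht: "ht y < a \<and> ?s y (ht y) = y" if "y \<in> A" for y
  proof -
    have "y \<in> ?s y ` {..<a}" using short that by (rule bspec)
    then obtain \<eta> where \<eta>: "\<eta> \<in> {..<a}" "y = ?s y \<eta>" by (rule imageE)
    from \<eta>(1) \<eta>(2)[symmetric] have "\<eta> < a \<and> ?s y \<eta> = y" by simp
    thus ?thesis unfolding ht_def by (rule someI)
  qed
  define code where "code y T = (if T \<subseteq> {..<ht y} \<and> finite (?s y ` T) \<and> card (?s y ` T) = m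
       then Some (g (c (insert y (?s y ` T)))) else None)" for y T
  show ?thesis
  proof (rule card_of_ordLeqI[of "\<lambda>y. (ht y, code y)"])
    show "inj_on (\<lambda>y. (ht y, code y)) A"
    proof (rule inj_onI)
      fix y y' assume yA: "y \<in> A" "y' \<in> A" and eq: "(ht y, code y) = (ht y', code y')"
      have "\<forall>T\<subseteq>{..<ht y}. finite (?s y ` T) \<and> card (?s y ` T) = m \<longrightarrow>
              c (insert y (?s y ` T)) = c (insert y' (?s y' ` T))"
      proof (intro allI impI)
        fix T assume T: "T \<subseteq> {..<ht y}" "finite (?s y ` T) \<and> card (?s y ` T) = m"
        hence "code y T = Some (g (c (insert y (?s y ` T))))"
          unfolding code_def by simp
        hence "code y' T = Some (g (c (insert y (?s y ` T))))"
          using eq by simp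
        hence "g (c (insert y (?s y ` T))) = g (c (insert y' (?s y' ` T)))"
          unfolding code_def by (simp split: if_splits)
        thus "c (insert y (?s y ` T)) = c (insert y' (?s y' ` T))"
          by (rule inj_onD[OF g(1)]) simp_all
      qed
      hence agree: "?s y (ht y) = ?s y' (ht y)" by (rule er_path_agree) simp
      have "y = ?s y (ht y)" using ht[OF yA(1)] by simp
      also have "\<dots> = ?s y' (ht y')" using agree eq by simp
      also have "\<dots> = y'" using ht[OF yA(2)] by simp
      finally show "y = y'" .
    qed
  next
    fix y assume "y \<in> A"
    thus "(ht y, code y) \<in> {..<a} \<times> {f. \<forall>T. f T \<noteq> None \<longrightarrow> T \<in> Pow {..<a} \<and> the (f T) \<in> {..<\<kappa>}}"
      using ht[OF \<open>y \<in> A\<close>] g(2) unfolding code_def by (auto split: if_splits)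
  qed
qed

context inaccessible
begin

theorem erdos_rado:
  fixes \<mu> \<kappa> :: 'k
  shows "\<exists>\<nu>::'k. \<forall>(A::'a set) (c::'a set \<Rightarrow> 'c). |range c| \<le>o |{..<\<kappa>}| \<longrightarrow> |{..<\<nu>}| \<le>o |A| \<longrightarrow>
           (\<exists>H\<subseteq>A. |{..<\<mu>}| \<le>o |H| \<and> homogeneous c m H)"
proof (induction m arbitrary: \<mu>)
  case 0
  show ?case
    by (intro exI[of _ \<mu>]) (auto simp: homogeneous_def)
next
  case (Suc m)
  obtain a :: 'k where a: "\<forall>(A::'a set) (c::'a set \<Rightarrow> 'c). |range c| \<le>o |{..<\<kappa>}| \<longrightarrow> |{..<a}| \<le>o |A| \<longrightarrow>
      (\<exists>H\<subseteq>A. |{..<\<mu>}| \<le>o |H| \<and> homogeneous c m H)"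
    using Suc.IH by blast
  have "small ({..<a} \<times> {f. \<forall>T. f T \<noteq> None \<longrightarrow> T \<in> Pow {..<a} \<and> the (f T) \<in> {..<\<kappa>}})"
    by (intro small_Times small_partial_funs small_lessThan small_Pow)
  then obtain \<nu> :: 'k where \<nu>: "|{..<a} \<times> {f. \<forall>T. f T \<noteq> None \<longrightarrow> T \<in> Pow {..<a} \<and> the (f T) \<in> {..<\<kappa>}}| <o |{..<\<nu>}|"
    using small_ordLess_lessThan by blast
  show ?case
  proof (intro exI[of _ \<nu>] allI impI)
    fix A :: "'a set" and c :: "'a set \<Rightarrow> 'c"
    assume colours: "|range c| \<le>o |{..<\<kappa>}|" and large: "|{..<\<nu>}| \<le>o |A|"
    obtain y where y: "y \<in> A" "y \<notin> er_path A c m y ` {..<a}"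
    proof (rule ccontr)
      assume "\<not> thesis"
      hence "\<forall>y\<in>A. y \<in> er_path A c m y ` {..<a}" using that by blast
      hence "|A| \<le>o |{..<a} \<times> {f. \<forall>T. f T \<noteq> None \<longrightarrow> T \<in> Pow {..<a} \<and> the (f T) \<in> {..<\<kappa>}}|"
        using colours by (rule er_paths_short_ordLeq)
      hence "|A| <o |{..<\<nu>}|" using \<nu> by (rule ordLeq_ordLess_trans)
      hence "|A| <o |A|" using large by (rule ordLess_ordLeq_trans)
      thus False by (simp add: ordLess_irreflexive)
    qed
    define E where "E = er_path A c m y ` {..<a}"
    note path = er_path_long[OF y, folded E_def]
    have "|{..<a}| =o |E|"
      unfolding E_def by (rule card_of_ordIsoI[OF inj_on_imp_bij_betw[OF path(2)]])
    hence "|{..<a}| \<le>o |E|" by (rule ordIso_imp_ordLeq)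
    moreover have "|range (\<lambda>t. c (insert y t))| \<le>o |{..<\<kappa>}|"
      by (rule ordLeq_transitive[OF card_of_mono1 colours]) auto
    ultimately obtain H where H: "H \<subseteq> E" "|{..<\<mu>}| \<le>o |H|" "homogeneous (\<lambda>t. c (insert y t)) m H"
      using a by blast
    have "homogeneous c (Suc m) H"
      unfolding homogeneous_def
    proof (intro ballI)
      fix u u' assume u: "u \<in> [H]\<^bsup>Suc m\<^esup>" and u': "u' \<in> [H]\<^bsup>Suc m\<^esup>"
      obtain t where t: "t \<in> [u]\<^bsup>m\<^esup>" "c u = c (insert y t)"
        using path(3) nsets_mono[OF H(1)] u by blast
      obtain t' where t': "t' \<in> [u']\<^bsup>m\<^esup>" "c u' = c (insert y t')"
        using path(3) nsets_mono[OF H(1)] u' by blast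
      have "t \<in> [H]\<^bsup>m\<^esup>" "t' \<in> [H]\<^bsup>m\<^esup>"
        using t(1) t'(1) u u' by (auto simp: nsets_def)
      hence "c (insert y t) = c (insert y t')" using H(3) unfolding homogeneous_def by blast
      thus "c u = c u'" using t(2) t'(2) by simp
    qed
    with H(1,2) path(1) show "\<exists>H\<subseteq>A. |{..<\<mu>}| \<le>o |H| \<and> homogeneous c (Suc m) H"
      by blast
  qed
qed
end

section \<open>Colourings constant on cofinally many levels\<close>

definition constant_colours :: "(nat \<times> ('a set \<Rightarrow> 'c)) list \<Rightarrow> 'a set \<Rightarrow> 'c list \<Rightarrow> bool" where
  "constant_colours cl H \<gamma>s \<longleftrightarrow> (\<forall>i<length cl. \<forall>t\<in>[H]\<^bsup>fst (cl!i)\<^esup>. snd (cl!i) t = \<gamma>s!i)"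

lemma constant_colours_subset:
  "constant_colours cl H \<gamma>s \<Longrightarrow> H' \<subseteq> H \<Longrightarrow> constant_colours cl H' \<gamma>s"
  unfolding constant_colours_def using nsets_mono by blast

lemma homogeneous_imp_constant_colours:
  assumes hom: "\<forall>mc\<in>set cl. homogeneous (snd mc) (fst mc) H"
    and ranges: "\<forall>mc\<in>set cl. range (snd mc) \<subseteq> CS"
  shows "\<exists>\<gamma>s. length \<gamma>s = length cl \<and> set \<gamma>s \<subseteq> CS \<and> constant_colours cl H \<gamma>s"
proof (intro exI conjI)
  let ?\<gamma>s = "map (\<lambda>mc. snd mc (SOME t. t \<in> [H]\<^bsup>fst mc\<^esup>)) cl"
  show "length ?\<gamma>s = length cl" by simp
  show "set ?\<gamma>s \<subseteq> CS" using ranges by auto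
  show "constant_colours cl H ?\<gamma>s"
    unfolding constant_colours_def
  proof (intro allI impI ballI)
    fix i t assume i: "i < length cl" and t: "t \<in> [H]\<^bsup>fst (cl!i)\<^esup>"
    from t have "(SOME t. t \<in> [H]\<^bsup>fst (cl!i)\<^esup>) \<in> [H]\<^bsup>fst (cl!i)\<^esup>" by (rule someI)
    moreover have "homogeneous (snd (cl!i)) (fst (cl!i)) H" using hom i by simp
    ultimately have "snd (cl!i) t = snd (cl!i) (SOME t. t \<in> [H]\<^bsup>fst (cl!i)\<^esup>)"
      using t unfolding homogeneous_def by blast
    thus "snd (cl!i) t = ?\<gamma>s!i" using i by simp
  qed
qed

lemma constant_colours_eq:
  assumes H: "constant_colours cl H \<gamma>s" and H': "constant_colours cl H' \<gamma>s"
    and mc: "(m, c) \<in> set cl" and t: "t \<in> [H]\<^bsup>m\<^esup>" and t': "t' \<in> [H']\<^bsup>m\<^esup>"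
  shows "c t = c t'"
proof -
  obtain i where i: "i < length cl" "cl ! i = (m, c)" using mc by (auto simp: in_set_conv_nth)
  hence "c t = \<gamma>s!i" "c t' = \<gamma>s!i"
    using H H' t t' unfolding constant_colours_def by (metis fst_conv snd_conv)+
  thus ?thesis by simp
qed

definition cofinally_large :: "('k::wellorder \<Rightarrow> 'a set) \<Rightarrow> bool" where
  "cofinally_large Y \<longleftrightarrow> (\<forall>b (\<mu>::'k). \<exists>i. b < i \<and> |{..<\<mu>}| \<le>o |Y i| )"

context inaccessible
begin

lemma erdos_rado_simultaneous:
  fixes \<mu> \<kappa> :: 'k and cl :: "(nat \<times> ('a set \<Rightarrow> 'c)) list"
  assumes "\<forall>mc\<in>set cl. |range (snd mc)| \<le>o |{..<\<kappa>}|"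
  shows "\<exists>\<nu>::'k. \<forall>A::'a set. |{..<\<nu>}| \<le>o |A| \<longrightarrow>
           (\<exists>H\<subseteq>A. |{..<\<mu>}| \<le>o |H| \<and> (\<forall>mc\<in>set cl. homogeneous (snd mc) (fst mc) H))"
  using assms
proof (induction cl arbitrary: \<mu>)
  case Nil
  show ?case by (intro exI[of _ \<mu>]) auto
next
  case (Cons mc cl)
  obtain \<nu>1 :: 'k where \<nu>1: "\<forall>A::'a set. |{..<\<nu>1}| \<le>o |A| \<longrightarrow>
      (\<exists>H\<subseteq>A. |{..<\<mu>}| \<le>o |H| \<and> (\<forall>mc\<in>set cl. homogeneous (snd mc) (fst mc) H))"
    using Cons.IH[of \<mu>] Cons.prems by auto
  obtain \<nu> :: 'k where \<nu>: "\<forall>(A::'a set) (c::'a set \<Rightarrow> 'c). |range c| \<le>o |{..<\<kappa>}| \<longrightarrow>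
      |{..<\<nu>}| \<le>o |A| \<longrightarrow> (\<exists>H\<subseteq>A. |{..<\<nu>1}| \<le>o |H| \<and> homogeneous c (fst mc) H)"
    using erdos_rado[where \<mu>=\<nu>1 and \<kappa>=\<kappa> and m="fst mc"] by blast
  show ?case
  proof (intro exI[of _ \<nu>] allI impI)
    fix A :: "'a set" assume A: "|{..<\<nu>}| \<le>o |A|"
    obtain H1 where H1: "H1 \<subseteq> A" "|{..<\<nu>1}| \<le>o |H1|" "homogeneous (snd mc) (fst mc) H1"
      using \<nu>[rule_format, of "snd mc" A] Cons.prems A by auto
    obtain H where H: "H \<subseteq> H1" "|{..<\<mu>}| \<le>o |H|" "\<forall>mc\<in>set cl. homogeneous (snd mc) (fst mc) H"
      using \<nu>1 H1(2) by blast
    have "homogeneous (snd mc) (fst mc) H" using H1(3) H(1) by (rule homogeneous_subset)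
    with H H1(1) show "\<exists>H\<subseteq>A. |{..<\<mu>}| \<le>o |H| \<and> (\<forall>mc\<in>set (mc # cl). homogeneous (snd mc) (fst mc) H)"
      by auto
  qed
qed

lemma cofinally_large_constant_colours:
  fixes Y :: "'k \<Rightarrow> 'a set" and cl :: "(nat \<times> ('a set \<Rightarrow> 'c)) list"
  assumes CS: "small CS" and ranges: "\<forall>mc\<in>set cl. range (snd mc) \<subseteq> CS" and Y: "cofinally_large Y"
  shows "\<exists>\<gamma>s. \<forall>b (\<mu>::'k). \<exists>i. b < i \<and> (\<exists>H\<subseteq>Y i. |{..<\<mu>}| \<le>o |H| \<and> constant_colours cl H \<gamma>s)"
proof (rule ccontr)
  define \<Gamma> where "\<Gamma> = {\<gamma>s. length \<gamma>s = length cl \<and> set \<gamma>s \<subseteq> CS}"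
  let ?good = "\<lambda>\<gamma>s (\<mu>::'k) i. \<exists>H\<subseteq>Y i. |{..<\<mu>}| \<le>o |H| \<and> constant_colours cl H \<gamma>s"
  assume "\<not> ?thesis"
  hence "\<forall>\<gamma>s. \<exists>p::'k \<times> 'k. \<forall>i. fst p < i \<longrightarrow> \<not> ?good \<gamma>s (snd p) i" by auto
  then obtain f :: "'c list \<Rightarrow> 'k \<times> 'k" where f: "\<forall>\<gamma>s i. fst (f \<gamma>s) < i \<longrightarrow> \<not> ?good \<gamma>s (snd (f \<gamma>s)) i"
    by (rule choice[THEN exE])
  define bf where "bf = fst \<circ> f"
  define \<mu>f where "\<mu>f = snd \<circ> f"
  have bad: "\<And>\<gamma>s i. bf \<gamma>s < i \<Longrightarrow> \<not> ?good \<gamma>s (\<mu>f \<gamma>s) i"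
    using f unfolding bf_def \<mu>f_def by simp
  have "small \<Gamma>" unfolding \<Gamma>_def using small_lists[OF CS] by simp
  obtain B where B: "bf ` \<Gamma> \<subseteq> {..<B}"
    using small_bounded[OF small_image[OF \<open>small \<Gamma>\<close>]] by blast
  obtain U where U: "\<mu>f ` \<Gamma> \<subseteq> {..<U}"
    using small_bounded[OF small_image[OF \<open>small \<Gamma>\<close>]] by blast
  obtain \<kappa> :: 'k where \<kappa>: "|CS| \<le>o |{..<\<kappa>}|"
    using small_ordLeq_lessThan[OF CS] by blast
  have "\<forall>mc\<in>set cl. |range (snd mc)| \<le>o |{..<\<kappa>}|"
  proof
    fix mc assume "mc \<in> set cl"
    thus "|range (snd mc)| \<le>o |{..<\<kappa>}|"
      using ranges by (intro ordLeq_transitive[OF card_of_mono1 \<kappa>]) blast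
  qed
  then obtain \<nu> :: 'k where \<nu>: "\<forall>A::'a set. |{..<\<nu>}| \<le>o |A| \<longrightarrow>
      (\<exists>H\<subseteq>A. |{..<U}| \<le>o |H| \<and> (\<forall>mc\<in>set cl. homogeneous (snd mc) (fst mc) H))"
    using erdos_rado_simultaneous[where \<mu>=U] by blast
  obtain i where i: "B < i" "|{..<\<nu>}| \<le>o |Y i|"
    using Y unfolding cofinally_large_def by blast
  obtain H where H: "H \<subseteq> Y i" "|{..<U}| \<le>o |H|" "\<forall>mc\<in>set cl. homogeneous (snd mc) (fst mc) H"
    using \<nu> i(2) by blast
  obtain \<gamma>s where \<gamma>s: "\<gamma>s \<in> \<Gamma>" "constant_colours cl H \<gamma>s"
    using homogeneous_imp_constant_colours[OF H(3) ranges] unfolding \<Gamma>_def by blast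
  have "bf \<gamma>s < i" using B \<gamma>s(1) i(1) by (auto intro: less_trans)
  moreover have "\<mu>f \<gamma>s \<le> U" using U \<gamma>s(1) by auto
  hence "|{..<\<mu>f \<gamma>s}| \<le>o |H|"
    by (rule ordLeq_transitive[OF lessThan_ordLeq_mono H(2)])
  hence "?good \<gamma>s (\<mu>f \<gamma>s) i" using H(1) \<gamma>s(2) by blast
  ultimately show False using bad by blast
qed

lemma cofinally_largeI:
  fixes Y :: "'k \<Rightarrow> 'a set"
  assumes small: "\<forall>i. small (Y i)" and large: "\<forall>\<mu>::'k. \<exists>i. |{..<\<mu>}| \<le>o |Y i|"
  shows "cofinally_large Y"
  unfolding cofinally_large_def
proof (intro allI)
  fix b \<mu> :: 'k
  obtain c where "{b} \<subseteq> {..<c}" using small_bounded[OF small_finite[of "{b}"]] by blast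
  hence "{..b} \<subseteq> {..<c}" by auto
  hence "small {..b}" using small_lessThan by (rule small_subset)
  hence "small (\<Union>i\<in>{..b}. Y i)" using small by (intro small_UN) auto
  then obtain \<nu> :: 'k where \<nu>: "|\<Union>i\<in>{..b}. Y i| <o |{..<\<nu>}|"
    using small_ordLess_lessThan by blast
  obtain i where i: "|{..<max \<mu> \<nu>}| \<le>o |Y i|" using large by blast
  have "b < i"
  proof (rule ccontr)
    assume "\<not> b < i"
    hence "|Y i| \<le>o |\<Union>i\<in>{..b}. Y i|" by (intro card_of_mono1) (auto simp: not_less)
    hence "|{..<max \<mu> \<nu>}| \<le>o |\<Union>i\<in>{..b}. Y i|" using i by (rule ordLeq_transitive[rotated])
    hence "|{..<\<nu>}| \<le>o |\<Union>i\<in>{..b}. Y i|"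
      by (rule ordLeq_transitive[OF lessThan_ordLeq_mono[OF max.cobounded2]])
    thus False using \<nu> not_ordLess_ordLeq by blast
  qed
  moreover have "|{..<\<mu>}| \<le>o |Y i|"
    by (rule ordLeq_transitive[OF lessThan_ordLeq_mono[OF max.cobounded1] i])
  ultimately show "\<exists>i. b < i \<and> |{..<\<mu>}| \<le>o |Y i|" by blast
qed
lemma strict_mono_selection:
  assumes "\<forall>i (b::'k). \<exists>l. b < l \<and> P i l"
  shows "\<exists>R::'k \<Rightarrow> 'k. strict_mono R \<and> (\<forall>i. P i (R i))"
proof -
  define R where "R = worec (\<lambda>R i. LEAST l. (\<forall>j<i. R j < l) \<and> P i l)"
  have R_eq: "R i = (LEAST l. (\<forall>j<i. R j < l) \<and> P i l)" for i
    unfolding R_def by (rule worec_unfold) simp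
  have R: "(\<forall>j<i. R j < R i) \<and> P i (R i)" for i
  proof -
    obtain b where b: "R ` {..<i} \<subseteq> {..<b}"
      using small_bounded[OF small_image[OF small_lessThan]] by blast
    obtain l where "b < l" "P i l" using assms by blast
    with b have "(\<forall>j<i. R j < l) \<and> P i l" by force
    thus ?thesis unfolding R_eq[of i] by (rule LeastI)
  qed
  hence "strict_mono R" unfolding strict_mono_def by blast
  with R show ?thesis by blast
qed

lemma cofinally_large_homogeneous_tail:
  fixes Y :: "'k \<Rightarrow> 'a set" and cl :: "(nat \<times> ('a set \<Rightarrow> 'c)) list" and i0 \<mu>0 :: 'k
  assumes Y: "cofinally_large Y" and CS: "small CS" and ranges: "\<forall>mc\<in>set cl. range (snd mc) \<subseteq> CS"
  shows "\<exists>(R::'k \<Rightarrow> 'k) X Z \<gamma>s. strict_mono R \<and> i0 < R kzero \<and>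
     X \<subseteq> Y (R kzero) \<and> |X| =o |{..<\<mu>0}| \<and> (\<forall>i. Z i \<subseteq> Y (R i)) \<and>
     (\<forall>m::'k. \<exists>i. i \<noteq> kzero \<and> |{..<m}| \<le>o |Z i| ) \<and>
     constant_colours cl X \<gamma>s \<and> (\<forall>i. constant_colours cl (Z i) \<gamma>s)"
proof -
  obtain \<gamma>s where \<gamma>s: "\<forall>b (\<mu>::'k). \<exists>i. b < i \<and> (\<exists>H\<subseteq>Y i. |{..<\<mu>}| \<le>o |H| \<and> constant_colours cl H \<gamma>s)"
    using cofinally_large_constant_colours[OF CS ranges Y] by blast
  \<comment> \<open>the level chosen for index \<open>kzero\<close> must host \<open>X\<close>, of size \<open>\<mu>0\<close>\<close>
  define sz where "sz i = (if i = kzero then \<mu>0 else i)" for i :: 'k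
  let ?P = "\<lambda>i l. i0 < l \<and> (\<exists>H\<subseteq>Y l. |{..<sz i}| \<le>o |H| \<and> constant_colours cl H \<gamma>s)"
  have "\<forall>i (b::'k). \<exists>l. b < l \<and> ?P i l"
  proof (intro allI)
    fix i b :: 'k
    obtain l where "max b i0 < l" "\<exists>H\<subseteq>Y l. |{..<sz i}| \<le>o |H| \<and> constant_colours cl H \<gamma>s"
      using \<gamma>s[rule_format, of "max b i0" "sz i"] by blast
    thus "\<exists>l. b < l \<and> ?P i l" by auto
  qed
  from strict_mono_selection[OF this] obtain R where R: "strict_mono R" "\<forall>i. ?P i (R i)"
    by blast
  hence "\<forall>i. \<exists>H. H \<subseteq> Y (R i) \<and> |{..<sz i}| \<le>o |H| \<and> constant_colours cl H \<gamma>s" by blast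
  then obtain Z where Z: "\<forall>i. Z i \<subseteq> Y (R i) \<and> |{..<sz i}| \<le>o |Z i| \<and> constant_colours cl (Z i) \<gamma>s"
    by (rule choice[THEN exE])
  have "|{..<\<mu>0}| \<le>o |Z kzero|" using Z[rule_format, of kzero] unfolding sz_def by simp
  then obtain X where X: "X \<subseteq> Z kzero" "|X| =o |{..<\<mu>0}|"
    by (blast dest: ordLeq_imp_ordIso_subset)
  have "\<exists>i. i \<noteq> kzero \<and> |{..<m}| \<le>o |Z i|" for m :: 'k
  proof (cases "m = kzero")
    case True
    obtain i :: 'k where "i \<noteq> kzero" using exists_not_kzero by blast
    thus ?thesis using True by (auto simp: lessThan_kzero card_of_empty)
  next
    case False
    thus ?thesis using Z[rule_format, of m] unfolding sz_def by auto
  qed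
  moreover have "X \<subseteq> Y (R kzero)" "constant_colours cl X \<gamma>s"
    using X(1) Z[rule_format, of kzero] constant_colours_subset by auto
  ultimately show ?thesis
    using R X(2) Z by (intro exI[of _ R] exI[of _ X] exI[of _ Z] exI[of _ \<gamma>s]) auto
qed

end

section \<open>Sentences of type \<open>\<Sigma>\<^sub>1\<^sup>*(iv)\<close>\<close>

lemma tval_cong: "(\<And>x. x \<in> tvars t \<Longrightarrow> v x = v' x) \<Longrightarrow> tval fI v t = tval fI v' t"
proof (induction t)
  case (Fn f ts)
  hence "map (tval fI v) ts = map (tval fI v') ts" by auto
  thus ?case by (simp only: tval.simps)
qed simp

lemma qidx_props:
  assumes ne: "cs \<noteq> []" and so: "sorted_wrt lexless cs"
  shows "qidx cs < length cs"
    and "\<And>k. k < qidx cs \<Longrightarrow> fst (cs!k) < fst (last cs)"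
    and "\<And>k. qidx cs \<le> k \<Longrightarrow> k < length cs \<Longrightarrow> fst (cs!k) = fst (last cs)"
    and "\<And>k k'. qidx cs \<le> k \<Longrightarrow> k < k' \<Longrightarrow> k' < length cs \<Longrightarrow> snd (cs!k) < snd (cs!k')"
proof -
  let ?n = "length cs"
  let ?P = "\<lambda>k. k < ?n \<and> fst (cs!k) \<noteq> fst (last cs)"
  have lastn: "last cs = cs!(?n - 1)" using ne by (simp add: last_conv_nth)
  have lex: "lexless (cs!k) (cs!k')" if "k < k'" "k' < ?n" for k k'
    using so that by (simp add: sorted_wrt_iff_nth_less)
  have fle: "fst (cs!k) \<le> fst (cs!k')" if "k \<le> k'" "k' < ?n" for k k'
  proof (cases "k = k'")
    case False thus ?thesis using lex[of k k'] that unfolding lexless_def by auto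
  qed simp
  have bnd: "?P y \<Longrightarrow> y \<le> ?n" for y by auto
  show q3: "fst (cs!k) = fst (last cs)" if "qidx cs \<le> k" "k < ?n" for k
  proof (rule ccontr)
    assume "fst (cs!k) \<noteq> fst (last cs)"
    hence Pk: "?P k" using that by auto
    hence "qidx cs = Suc (GREATEST k. ?P k)" unfolding qidx_def by auto
    moreover have "k \<le> (GREATEST k. ?P k)" by (rule Greatest_le_nat[where P = ?P, OF Pk bnd])
    ultimately show False using that by auto
  qed
  show "qidx cs < ?n"
  proof (cases "\<exists>k. ?P k")
    case True
    then obtain k where Pk: "?P k" by blast
    have G: "?P (GREATEST k. ?P k)" by (rule GreatestI_nat[where P = ?P, OF Pk bnd])
    have "(GREATEST k. ?P k) \<noteq> ?n - 1" using G lastn by auto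
    hence "Suc (GREATEST k. ?P k) < ?n" using G by auto
    moreover have "qidx cs = Suc (GREATEST k. ?P k)" unfolding qidx_def using True by auto
    ultimately show ?thesis by simp
  next
    case False thus ?thesis unfolding qidx_def using ne by auto
  qed
  show "fst (cs!k) < fst (last cs)" if k: "k < qidx cs" for k
  proof -
    have ex: "\<exists>k. ?P k"
    proof (rule ccontr)
      assume "\<not> (\<exists>k. ?P k)" hence "qidx cs = 0" unfolding qidx_def by auto
      thus False using k by simp
    qed
    then obtain k0 where Pk: "?P k0" by blast
    define G where "G = (GREATEST k. ?P k)"
    have PG: "?P G" unfolding G_def by (rule GreatestI_nat[where P = ?P, OF Pk bnd])
    have "qidx cs = Suc G" unfolding qidx_def G_def using ex by auto
    hence "k \<le> G" using k by simp
    hence "fst (cs!k) \<le> fst (cs!G)" using PG fle by auto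
    moreover have "fst (cs!G) \<le> fst (last cs)" using PG fle[of G "?n - 1"] lastn by auto
    ultimately show ?thesis using PG by auto
  qed
  show "snd (cs!k) < snd (cs!k')" if "qidx cs \<le> k" "k < k'" "k' < ?n" for k k'
  proof -
    have "fst (cs!k) = fst (cs!k')" using q3[of k] q3[of k'] that by auto
    thus ?thesis using lex[of k k'] that unfolding lexless_def by auto
  qed
qed

text \<open>Only the first \<open>q\<close>
  constants of \<open>\<tau>\<close> lie in blocks \<open>< e'\<close>; \<open>sent_val fI \<sigma> p zs\<close> reads them from the first
  \<open>e' - 1\<close> blocks \<open>p\<close> and substitutes \<open>zs\<close> for the remaining ones, which lie in block
  \<open>e'\<close> at the (0-based) columns \<open>lhs_cols \<sigma>\<close>.  The right-hand side puts them into block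
  \<open>rhs_block \<sigma>\<close> at the columns \<open>rhs_cols \<sigma>\<close>, and the bound \<open>c\<^sub>(\<^sub>e\<^sub>'\<^sub>-\<^sub>1\<^sub>)\<^sub>j\<close> lies in the last block of \<open>p\<close>.\<close>

definition sent_val :: "('f \<Rightarrow> 'm list \<Rightarrow> 'm) \<Rightarrow> 'f sent \<Rightarrow> 'm list list \<Rightarrow> 'm list \<Rightarrow> 'm" where
  "sent_val fI \<sigma> p zs = (case \<sigma> of (\<tau>, cs, j, u, ls) \<Rightarrow>
     tval fI (\<lambda>k. if k < qidx cs then aval p (cs!k) else zs!(k - qidx cs)) \<tau>)"

definition lhs_cols :: "'f sent \<Rightarrow> nat list" where
  "lhs_cols \<sigma> = (case \<sigma> of (\<tau>, cs, j, u, ls) \<Rightarrow> map (\<lambda>c. snd c - 1) (drop (qidx cs) cs))"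

definition rhs_cols :: "'f sent \<Rightarrow> nat list" where
  "rhs_cols \<sigma> = (case \<sigma> of (\<tau>, cs, j, u, ls) \<Rightarrow> map (\<lambda>l. l - 1) ls)"

definition rhs_block :: "'f sent \<Rightarrow> nat" where
  "rhs_block \<sigma> = (case \<sigma> of (\<tau>, cs, j, u, ls) \<Rightarrow> u)"

definition bound_col :: "'f sent \<Rightarrow> nat" where
  "bound_col \<sigma> = (case \<sigma> of (\<tau>, cs, j, u, ls) \<Rightarrow> j)"

definition bound_const :: "nat \<Rightarrow> 'f sent \<Rightarrow> 'm list list \<Rightarrow> 'm" where
  "bound_const e' \<sigma> p = aval p (e' - 1, bound_col \<sigma>)"

definition admissible :: "('f \<Rightarrow> nat) \<Rightarrow> nat \<Rightarrow> nat \<Rightarrow> nat \<Rightarrow> 'f sent \<Rightarrow> bool" where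
  "admissible ar r s e' \<sigma> \<longleftrightarrow> is_sigma ar \<sigma> \<and> iota \<sigma> = e' \<and>
      (\<forall>c\<in>sconsts \<sigma>. 1 \<le> fst c \<and> fst c \<le> s \<and> 1 \<le> snd c \<and> snd c \<le> r)"

lemma admissible_bounds:
  assumes g: "admissible ar r s e' \<sigma>"
  shows "sorted_wrt (<) (lhs_cols \<sigma>)" "\<forall>x\<in>set (lhs_cols \<sigma>). x < r"
    "sorted_wrt (<) (rhs_cols \<sigma>)" "\<forall>x\<in>set (rhs_cols \<sigma>). x < r"
    "length (rhs_cols \<sigma>) = length (lhs_cols \<sigma>)" "e' \<le> rhs_block \<sigma>" "rhs_block \<sigma> \<le> s" "1 \<le> bound_col \<sigma>" "bound_col \<sigma> \<le> r"
    "2 \<le> e'"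
proof -
  obtain \<tau> cs j u ls where \<sigma>: "\<sigma> = (\<tau>, cs, j, u, ls)" by (cases \<sigma>) auto
  have isg: "cs \<noteq> []" "sorted_wrt lexless cs" "fst (last cs) > 1" "u \<ge> fst (last cs)"
     "length ls = length cs - qidx cs" "sorted_wrt (<) ls"
    using g unfolding admissible_def is_sigma_def \<sigma> by auto
  have io: "fst (last cs) = e'" using g unfolding admissible_def iota_def \<sigma> by auto
  have bd: "\<forall>c\<in>sconsts \<sigma>. 1 \<le> fst c \<and> fst c \<le> s \<and> 1 \<le> snd c \<and> snd c \<le> r"
    using g unfolding admissible_def by auto
  have bcs: "\<forall>c\<in>set cs. 1 \<le> snd c \<and> snd c \<le> r" using bd unfolding sconsts_def \<sigma> by auto
  have bls: "\<forall>l\<in>set ls. 1 \<le> l \<and> l \<le> r"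
  proof
    fix l assume "l \<in> set ls"
    hence "(u,l) \<in> sconsts \<sigma>" unfolding sconsts_def \<sigma> by auto
    thus "1 \<le> l \<and> l \<le> r" using bd by fastforce
  qed
  have bu: "u \<le> s"
  proof -
    have "ls \<noteq> []" using isg(5) qidx_props(1)[OF isg(1,2)] by auto
    then obtain l where "l \<in> set ls" by (cases ls) auto
    hence "(u,l) \<in> sconsts \<sigma>" unfolding sconsts_def \<sigma> by auto
    thus "u \<le> s" using bd by fastforce
  qed
  have bj: "1 \<le> j \<and> j \<le> r" using bd unfolding sconsts_def \<sigma> by auto
  show "2 \<le> e'" using isg io by auto
  show "e' \<le> rhs_block \<sigma>" "rhs_block \<sigma> \<le> s" using isg io bu unfolding rhs_block_def \<sigma> by auto
  show "1 \<le> bound_col \<sigma>" "bound_col \<sigma> \<le> r" using bj unfolding bound_col_def \<sigma> by auto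
  show "length (rhs_cols \<sigma>) = length (lhs_cols \<sigma>)" using isg unfolding rhs_cols_def lhs_cols_def \<sigma> by simp
  show "\<forall>x\<in>set (lhs_cols \<sigma>). x < r"
  proof
    fix x assume "x \<in> set (lhs_cols \<sigma>)"
    then obtain c where c: "c \<in> set (drop (qidx cs) cs)" "x = snd c - 1" unfolding lhs_cols_def \<sigma> by auto
    have "c \<in> set cs" using c(1) by (rule in_set_dropD)
    thus "x < r" using bcs c(2) by auto
  qed
  show "\<forall>x\<in>set (rhs_cols \<sigma>). x < r" using bls unfolding rhs_cols_def \<sigma> by auto
  have "sorted_wrt (\<lambda>x y. x - 1 < y - (1::nat)) ls"
    by (rule sorted_wrt_mono_rel[OF _ isg(6)]) (use bls in auto)
  thus "sorted_wrt (<) (rhs_cols \<sigma>)" unfolding rhs_cols_def \<sigma> by (simp add: sorted_wrt_map)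
  show "sorted_wrt (<) (lhs_cols \<sigma>)"
  proof -
    have "\<forall>i i'. i < i' \<longrightarrow> i' < length (lhs_cols \<sigma>) \<longrightarrow> lhs_cols \<sigma> ! i < lhs_cols \<sigma> ! i'"
    proof (intro allI impI)
      fix i i' assume ii: "i < i'" "i' < length (lhs_cols \<sigma>)"
      let ?q = "qidx cs"
      have l: "length (lhs_cols \<sigma>) = length cs - ?q" unfolding lhs_cols_def \<sigma> by simp
      have "snd (cs!(?q+i)) < snd (cs!(?q+i'))"
        using qidx_props(4)[OF isg(1,2), of "?q+i" "?q+i'"] ii l by auto
      moreover have "1 \<le> snd (cs!(?q+i))" using bcs ii l by auto
      ultimately show "lhs_cols \<sigma> ! i < lhs_cols \<sigma> ! i'" unfolding lhs_cols_def \<sigma> using ii l by auto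
    qed
    thus ?thesis by (simp add: sorted_wrt_iff_nth_less)
  qed
qed

lemma holds_iff_sent_val:
  assumes g: "admissible ar r s e' \<sigma>"
  shows "holds fI lss a \<sigma> \<longleftrightarrow>
    (lss (sent_val fI \<sigma> (take (e'-1) a) (map (nth (a!(e'-1))) (lhs_cols \<sigma>))) (bound_const e' \<sigma> (take (e'-1) a)) \<longrightarrow>
     sent_val fI \<sigma> (take (e'-1) a) (map (nth (a!(e'-1))) (lhs_cols \<sigma>)) =
     sent_val fI \<sigma> (take (e'-1) a) (map (nth (a!(rhs_block \<sigma> - 1))) (rhs_cols \<sigma>)))"
proof -
  obtain \<tau> cs j u ls where \<sigma>: "\<sigma> = (\<tau>, cs, j, u, ls)" by (cases \<sigma>) auto
  have isg: "cs \<noteq> []" "sorted_wrt lexless cs" "fst (last cs) > 1" "u \<ge> fst (last cs)"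
     "length ls = length cs - qidx cs" "sorted_wrt (<) ls" "tvars \<tau> \<subseteq> {..<length cs}"
    using g unfolding admissible_def is_sigma_def \<sigma> by auto
  have io: "fst (last cs) = e'" using g unfolding admissible_def iota_def \<sigma> by auto
  let ?q = "qidx cs"
  let ?p = "take (e'-1) a"
  have bd: "\<forall>c\<in>sconsts \<sigma>. 1 \<le> fst c \<and> fst c \<le> s \<and> 1 \<le> snd c \<and> snd c \<le> r"
    using g unfolding admissible_def by auto
  have bcs: "\<forall>c\<in>set cs. 1 \<le> fst c" using bd unfolding sconsts_def \<sigma> by auto
  have avp: "aval a (cs!k) = aval ?p (cs!k)" if "k < ?q" for k
  proof -
    have "fst (cs!k) < e'" using qidx_props(2)[OF isg(1,2) that] io by simp
    moreover have "k < length cs" using that qidx_props(1)[OF isg(1,2)] by simp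
    hence "1 \<le> fst (cs!k)" using bcs by auto
    ultimately show ?thesis unfolding aval_def by simp
  qed
  have qle: "?q \<le> length cs" using qidx_props(1)[OF isg(1,2)] by simp
  have Jn: "lhs_cols \<sigma> ! i = snd (cs!(?q+i)) - 1" if "i < length cs - ?q" for i
    unfolding lhs_cols_def \<sigma> using that qle by simp
  have lJ: "length (lhs_cols \<sigma>) = length cs - ?q" unfolding lhs_cols_def \<sigma> by simp
  have Ln: "rhs_cols \<sigma> ! i = ls!i - 1" if "i < length ls" for i
    unfolding rhs_cols_def \<sigma> using that by simp
  have lL: "length (rhs_cols \<sigma>) = length ls" unfolding rhs_cols_def \<sigma> by simp
  have "tval fI (\<lambda>k. aval a (cs ! k)) \<tau> = tval fI (\<lambda>k. if k < ?q then aval ?p (cs!k)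
       else (map (nth (a!(e'-1))) (lhs_cols \<sigma>))!(k - ?q)) \<tau>"
  proof (rule tval_cong)
    fix k assume "k \<in> tvars \<tau>"
    hence k: "k < length cs" using isg(7) by auto
    show "aval a (cs ! k) = (if k < ?q then aval ?p (cs!k)
       else (map (nth (a!(e'-1))) (lhs_cols \<sigma>))!(k - ?q))"
    proof (cases "k < ?q")
      case True thus ?thesis using avp by simp
    next
      case False
      have "fst (cs!k) = e'" using qidx_props(3)[OF isg(1,2)] False k io by simp
      moreover have "k - ?q < length cs - ?q" using False k by simp
      ultimately show ?thesis using False k Jn[of "k - ?q"] lJ unfolding aval_def by simp
    qed
  qed
  hence lhs: "tval fI (\<lambda>k. aval a (cs ! k)) \<tau> = sent_val fI \<sigma> ?p (map (nth (a!(e'-1))) (lhs_cols \<sigma>))"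
    unfolding sent_val_def \<sigma> by simp
  have "tval fI (\<lambda>k. aval a ((take ?q cs @ map (\<lambda>l. (u, l)) ls) ! k)) \<tau>
      = tval fI (\<lambda>k. if k < ?q then aval ?p (cs!k)
       else (map (nth (a!(rhs_block \<sigma> - 1))) (rhs_cols \<sigma>))!(k - ?q)) \<tau>"
  proof (rule tval_cong)
    fix k assume "k \<in> tvars \<tau>"
    hence k: "k < length cs" using isg(7) by auto
    show "aval a ((take ?q cs @ map (\<lambda>l. (u, l)) ls) ! k) = (if k < ?q then aval ?p (cs!k)
       else (map (nth (a!(rhs_block \<sigma> - 1))) (rhs_cols \<sigma>))!(k - ?q))"
    proof (cases "k < ?q")
      case True thus ?thesis using avp qle by (simp add: nth_append)
    next
      case False
      have kl: "k - ?q < length ls" using isg(5) k False by simp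
      thus ?thesis using False qle Ln[OF kl] lL unfolding aval_def rhs_block_def \<sigma> by (simp add: nth_append)
    qed
  qed
  hence rhs: "tval fI (\<lambda>k. aval a ((take ?q cs @ map (\<lambda>l. (u, l)) ls) ! k)) \<tau>
         = sent_val fI \<sigma> ?p (map (nth (a!(rhs_block \<sigma> - 1))) (rhs_cols \<sigma>))"
    unfolding sent_val_def \<sigma> by simp
  have cv: "aval a (fst (last cs) - 1, j) = bound_const e' \<sigma> ?p"
    unfolding bound_const_def bound_col_def \<sigma> aval_def using io isg(3) by simp
  show ?thesis unfolding holds_def \<sigma> Let_def
    using lhs rhs cv by (simp add: \<sigma>)
qed

lemma incr_mono: "X \<subseteq> Y \<Longrightarrow> incr lss r X \<subseteq> incr lss r Y"
  unfolding incr_def by auto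

lemma sorted_wrt_irrefl_distinct: "sorted_wrt R xs \<Longrightarrow> (\<forall>x. \<not> R x x) \<Longrightarrow> distinct xs"
  by (induction xs) auto

lemma sorted_wrt_unique:
  assumes irr: "\<forall>x. \<not> R x x" and trn: "\<forall>x y z. R x y \<longrightarrow> R y z \<longrightarrow> R x z"
  shows "sorted_wrt R xs \<Longrightarrow> sorted_wrt R ys \<Longrightarrow> set xs = set ys \<Longrightarrow> xs = ys"
proof (induction xs arbitrary: ys)
  case Nil thus ?case by simp
next
  case (Cons x xs)
  then obtain y ys' where ys: "ys = y # ys'" by (cases ys) auto
  have xy: "x = y"
  proof (rule ccontr)
    assume ne: "x \<noteq> y"
    have "y \<in> set xs" using Cons.prems(3) ys ne by (metis insertI1 set_ConsD list.simps(15))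
    hence "R x y" using Cons.prems(1) by simp
    moreover have "x \<in> set ys'" using Cons.prems(3) ys ne by (metis insertI1 set_ConsD list.simps(15))
    hence "R y x" using Cons.prems(2) ys by simp
    ultimately show False using irr trn by blast
  qed
  have "x \<notin> set xs" using Cons.prems(1) irr by auto
  moreover have "y \<notin> set ys'" using Cons.prems(2) irr ys by auto
  ultimately have "set xs = set ys'" using Cons.prems(3) ys xy by auto
  hence "xs = ys'" using Cons.IH Cons.prems ys by auto
  thus ?case using xy ys by simp
qed

definition sorted_of :: "('m \<Rightarrow> 'm \<Rightarrow> bool) \<Rightarrow> 'm set \<Rightarrow> 'm list" where
  "sorted_of lss z = (THE xs. set xs = z \<and> sorted_wrt lss xs)"

lemma sorted_of_set:
  assumes irr: "\<forall>x. \<not> lss x x" and trn: "\<forall>x y z. lss x y \<longrightarrow> lss y z \<longrightarrow> lss x z"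
    and so: "sorted_wrt lss xs"
  shows "sorted_of lss (set xs) = xs"
  unfolding sorted_of_def
proof (rule the_equality)
  show "set xs = set xs \<and> sorted_wrt lss xs" using so by simp
  fix ys assume "set ys = set xs \<and> sorted_wrt lss ys"
  thus "ys = xs" using sorted_wrt_unique[OF irr trn] so by metis
qed

lemma sorted_wrt_map_nth:
  assumes b: "sorted_wrt lss b" "length b = r" and P: "sorted_wrt (<) P" "\<forall>x\<in>set P. x < r"
  shows "sorted_wrt lss (map (nth b) P)" "set (map (nth b) P) \<subseteq> set b"
proof -
  show "sorted_wrt lss (map (nth b) P)"
  proof (unfold sorted_wrt_iff_nth_less, intro allI impI)
    fix i j assume ij: "i < j" "j < length (map (nth b) P)"
    have "P!i < P!j" using P(1) ij by (simp add: sorted_wrt_iff_nth_less)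
    moreover have "P!j < r" using P(2) ij by simp
    ultimately show "lss (map (nth b) P ! i) (map (nth b) P ! j)"
      using b ij by (simp add: sorted_wrt_iff_nth_less)
  qed
  show "set (map (nth b) P) \<subseteq> set b" using P(2) b(2) by auto
qed

text \<open>Recording the value only when it lies below the bound keeps the number of colours
  below \<open>\<theta>\<close>.\<close>

definition sent_colour :: "('f \<Rightarrow> 'm list \<Rightarrow> 'm) \<Rightarrow> ('m \<Rightarrow> 'm \<Rightarrow> bool) \<Rightarrow> nat \<Rightarrow> 'm list list set
    \<Rightarrow> 'f sent \<Rightarrow> 'm set \<Rightarrow> 'm list list \<Rightarrow> 'm option" where
  "sent_colour fI lss e' P \<sigma> z = (\<lambda>p. if p \<in> P \<and> lss (sent_val fI \<sigma> p (sorted_of lss z)) (bound_const e' \<sigma> p)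
       then Some (sent_val fI \<sigma> p (sorted_of lss z)) else None)"

lemma sent_val_eq_if_constant_colours:
  assumes irr: "\<forall>x. \<not> lss x x" and trn: "\<forall>x y z. lss x y \<longrightarrow> lss y z \<longrightarrow> lss x z"
    and g: "admissible ar r s e' \<sigma>"
    and H1: "constant_colours cl H1 \<gamma>s" and H2: "constant_colours cl H2 \<gamma>s"
    and cl: "(length (lhs_cols \<sigma>), sent_colour fI lss e' P \<sigma>) \<in> set cl"
    and p: "p \<in> P" and b: "b \<in> incr lss r H1" and b': "b' \<in> incr lss r H2"
  shows "lss (sent_val fI \<sigma> p (map (nth b) (lhs_cols \<sigma>))) (bound_const e' \<sigma> p) \<longrightarrow>
         sent_val fI \<sigma> p (map (nth b) (lhs_cols \<sigma>)) = sent_val fI \<sigma> p (map (nth b') (rhs_cols \<sigma>))"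
proof
  let ?zs = "map (nth b) (lhs_cols \<sigma>)"
  let ?zs' = "map (nth b') (rhs_cols \<sigma>)"
  let ?m = "length (lhs_cols \<sigma>)"
  note sp = admissible_bounds[OF g]
  have bb: "sorted_wrt lss b" "length b = r" "set b \<subseteq> H1" using b unfolding incr_def by auto
  have bb': "sorted_wrt lss b'" "length b' = r" "set b' \<subseteq> H2" using b' unfolding incr_def by auto
  have z1: "sorted_wrt lss ?zs" "set ?zs \<subseteq> set b" using sorted_wrt_map_nth[OF bb(1,2) sp(1,2)] by auto
  have z2: "sorted_wrt lss ?zs'" "set ?zs' \<subseteq> set b'" using sorted_wrt_map_nth[OF bb'(1,2) sp(3,4)] by auto
  have d1: "distinct ?zs" using sorted_wrt_irrefl_distinct[OF z1(1) irr] .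
  have d2: "distinct ?zs'" using sorted_wrt_irrefl_distinct[OF z2(1) irr] .
  have "set ?zs \<in> [H1]\<^bsup>?m\<^esup>" unfolding nsets_def using z1(2) bb(3) distinct_card[OF d1] by auto
  moreover have "set ?zs' \<in> [H2]\<^bsup>?m\<^esup>" unfolding nsets_def using z2(2) bb'(3) distinct_card[OF d2] sp(5) by auto
  ultimately have same: "sent_colour fI lss e' P \<sigma> (set ?zs) = sent_colour fI lss e' P \<sigma> (set ?zs')"
    by (rule constant_colours_eq[OF H1 H2 cl])
  assume lt: "lss (sent_val fI \<sigma> p ?zs) (bound_const e' \<sigma> p)"
  have "sent_colour fI lss e' P \<sigma> (set ?zs) p = Some (sent_val fI \<sigma> p ?zs)"
    unfolding sent_colour_def sorted_of_set[OF irr trn z1(1)] using p lt by simp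
  hence "sent_colour fI lss e' P \<sigma> (set ?zs') p = Some (sent_val fI \<sigma> p ?zs)"
    by (simp only: same)
  thus "sent_val fI \<sigma> p ?zs = sent_val fI \<sigma> p ?zs'"
    unfolding sent_colour_def sorted_of_set[OF irr trn z2(1)] by (simp split: if_splits)
qed

section \<open>Extending a winning strategy\<close>

definition game_product :: "('m \<Rightarrow> 'm \<Rightarrow> bool) \<Rightarrow> ('m \<Rightarrow> 'k::wellorder) \<Rightarrow> nat \<Rightarrow> nat \<Rightarrow> nat
    \<Rightarrow> (nat \<Rightarrow> 'm set) \<Rightarrow> ('k \<Rightarrow> 'm set) \<Rightarrow> 'm list list set" where
  "game_product lss F r s e X Y = {xs @ ys | xs ys. length xs = e \<and> (\<forall>k<e. xs!k \<in> incr lss r (X k)) \<and>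
     ys \<in> Fseqs lss F r (s - e) (\<Union>i\<in>{i. i \<noteq> kzero}. Y i)}"

lemma game_win_iff:
  fixes F :: "'m \<Rightarrow> 'k::wellorder"
  shows "game_win lss F r s e S mus beta T \<longleftrightarrow>
     (\<forall>k. Suc k < e \<longrightarrow> beta k < beta (Suc k)) \<and> beta (e - 1) = T kzero \<and> strict_mono T \<and>
     (\<exists>X Y. (\<forall>k<e. X k \<subseteq> {a. F a = beta k} \<and> |X k| =o |{..<mus ! k}| ) \<and>
        (\<forall>i. i \<noteq> kzero \<longrightarrow> Y i \<subseteq> {a. F a = T i}) \<and>
        (\<forall>m::'k. \<exists>i. i \<noteq> kzero \<and> |{..<m}| \<le>o |Y i| ) \<and>
        game_product lss F r s e X Y \<subseteq> S)"
  by (simp add: game_win_def game_product_def lessThan_def)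

lemma Fseqs_block_in_level:
  assumes ys: "ys \<in> Fseqs lss F r f (\<Union>i\<in>I. Y i)" and c: "c \<in> set ys" and r: "0 < r"
    and YF: "\<forall>i\<in>I. Y i \<subseteq> {a. F a = T i}" and inj: "inj_on T I"
  shows "\<exists>i\<in>I. c \<in> incr lss r (Y i)"
proof -
  have cb: "c \<in> incr lss r (\<Union>i\<in>I. Y i)" "\<forall>y\<in>set c. F y = F (hd c)"
    using ys c unfolding Fseqs_def by auto
  have lc: "length c = r" and sc: "set c \<subseteq> (\<Union>i\<in>I. Y i)" using cb(1) unfolding incr_def by auto
  hence "c \<noteq> []" using r by auto
  hence "hd c \<in> set c" by simp
  then obtain i where i: "i \<in> I" "hd c \<in> Y i" using sc by blast
  have "set c \<subseteq> Y i"
  proof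
    fix y assume y: "y \<in> set c"
    then obtain i' where i': "i' \<in> I" "y \<in> Y i'" using sc by blast
    have "y \<in> {a. F a = T i'}" using subsetD[OF YF[rule_format, OF i'(1)] i'(2)] .
    hence "T i' = F y" by simp
    also have "\<dots> = F (hd c)" using cb(2) y by blast
    also have "\<dots> = T i" using subsetD[OF YF[rule_format, OF i(1)] i(2)] by simp
    finally have "i' = i" using inj i i' unfolding inj_on_def by blast
    thus "y \<in> Y i" using i' by simp
  qed
  thus ?thesis using i cb(1) unfolding incr_def by auto
qed

lemma hd_in_incr: "b \<in> incr lss r A \<Longrightarrow> 0 < r \<Longrightarrow> hd b \<in> A"
  unfolding incr_def by (cases b) auto

lemma Fseqs_mono: "A \<subseteq> B \<Longrightarrow> Fseqs lss F r f A \<subseteq> Fseqs lss F r f B"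
  unfolding Fseqs_def using incr_mono by blast

lemma Fseqs_append:
  assumes zs: "\<forall>b\<in>set zs. b \<in> incr lss r U \<and> (\<forall>y\<in>set b. F y = F (hd b))"
    and sorted: "sorted_wrt (\<lambda>b c. F (hd b) < F (hd c)) zs"
    and ys: "ys \<in> Fseqs lss F r f U"
    and below: "\<forall>b\<in>set zs. \<forall>c\<in>set ys. F (hd b) < F (hd c)"
  shows "zs @ ys \<in> Fseqs lss F r (length zs + f) U"
  using assms unfolding Fseqs_def by (auto simp: sorted_wrt_append)

text \<open>A play of \<open>G(S, e)\<close> yields one of \<open>G(S, e')\<close>: blocks \<open>e+1, \<dots>, e'\<close> are taken from the old
  tail at increasing levels, and the new tail lies above them inside the old one.\<close>

lemma game_product_shift:
  assumes SP: "game_product lss F r s e X Y \<subseteq> S"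
    and r: "0 < r" and ee: "e < e'" "e' \<le> s"
    and Xlow: "\<forall>k<e. X' k = X k"
    and Xmid: "\<forall>k. e \<le> k \<and> k < e' \<longrightarrow> X' k \<subseteq> (\<Union>i\<in>{i. i \<noteq> kzero}. Y i) \<and> X' k \<subseteq> {a. F a = B k}"
    and Bmono: "\<forall>k k'. e \<le> k \<and> k < k' \<and> k' < e' \<longrightarrow> (B k :: 'k::wellorder) < B k'"
    and Ytail: "\<forall>i. i \<noteq> kzero \<longrightarrow> Y' i \<subseteq> (\<Union>i\<in>{i. i \<noteq> kzero}. Y i) \<and> Y' i \<subseteq> {a. F a = T' i}"
    and Tbig: "\<forall>i. i \<noteq> kzero \<longrightarrow> B (e' - 1) < T' i"
  shows "game_product lss F r s e' X' Y' \<subseteq> S"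
proof
  fix a assume "a \<in> game_product lss F r s e' X' Y'"
  then obtain xs ys where a: "a = xs @ ys" and lx: "length xs = e'"
    and xk: "\<forall>k<e'. xs!k \<in> incr lss r (X' k)"
    and ys: "ys \<in> Fseqs lss F r (s - e') (\<Union>i\<in>{i. i \<noteq> kzero}. Y' i)"
    unfolding game_product_def by blast
  let ?U = "\<Union>i\<in>{i. i \<noteq> kzero}. Y i"
  have mid: "drop e xs ! i = xs ! (e + i)" "e \<le> e + i" "e + i < e'" if "i < length (drop e xs)" for i
    using that lx by auto
  have hd_mid: "F (hd (xs!k)) = B k" if "e \<le> k" "k < e'" for k
    using hd_in_incr[OF xk[rule_format] r] Xmid that by auto
  have "\<forall>b\<in>set (drop e xs). b \<in> incr lss r ?U \<and> (\<forall>y\<in>set b. F y = F (hd b))"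
  proof
    fix b assume "b \<in> set (drop e xs)"
    then obtain i where i: "i < length (drop e xs)" "b = xs ! (e + i)" by (auto simp: in_set_conv_nth)
    hence b: "b \<in> incr lss r (X' (e + i))" using xk mid[OF i(1)] by simp
    have "X' (e + i) \<subseteq> ?U" "X' (e + i) \<subseteq> {a. F a = B (e + i)}"
      using Xmid mid(2,3)[OF i(1)] by blast+
    moreover have "F (hd b) = B (e + i)" using hd_mid[OF mid(2,3)[OF i(1)]] i(2) by simp
    ultimately show "b \<in> incr lss r ?U \<and> (\<forall>y\<in>set b. F y = F (hd b))"
      using b incr_mono[of "X' (e + i)" ?U] unfolding incr_def by auto
  qed
  moreover have "sorted_wrt (\<lambda>b c. F (hd b) < F (hd c)) (drop e xs)"
    unfolding sorted_wrt_iff_nth_less using mid hd_mid Bmono by simp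
  moreover have "ys \<in> Fseqs lss F r (s - e') ?U"
    by (rule subsetD[OF Fseqs_mono ys]) (use Ytail in blast)
  moreover have "\<forall>b\<in>set (drop e xs). \<forall>c\<in>set ys. F (hd b) < F (hd c)"
  proof (intro ballI)
    fix b c assume "b \<in> set (drop e xs)" "c \<in> set ys"
    then obtain i where i: "i < length (drop e xs)" "b = xs ! (e + i)" by (auto simp: in_set_conv_nth)
    have "F (hd b) \<le> B (e' - 1)"
      using hd_mid[OF mid(2,3)[OF i(1)]] Bmono mid(2,3)[OF i(1)] i(2)
      by (cases "e + i = e' - 1") (auto intro: less_imp_le)
    moreover obtain i' where "i' \<noteq> kzero" "hd c \<in> Y' i'"
      using hd_in_incr[of c lss r, OF _ r] \<open>c \<in> set ys\<close> ys unfolding Fseqs_def by blast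
    hence "F (hd c) = T' i'" using Ytail by blast
    hence "B (e' - 1) < F (hd c)" using Tbig \<open>i' \<noteq> kzero\<close> by simp
    ultimately show "F (hd b) < F (hd c)" by simp
  qed
  ultimately have "drop e xs @ ys \<in> Fseqs lss F r (length (drop e xs) + (s - e')) ?U"
    by (rule Fseqs_append)
  moreover have "length (drop e xs) + (s - e') = s - e" using lx ee by simp
  moreover have "\<forall>k<e. take e xs ! k \<in> incr lss r (X k)"
  proof (intro allI impI)
    fix k assume "k < e"
    thus "take e xs ! k \<in> incr lss r (X k)" using xk[rule_format, of k] Xlow ee by simp
  qed
  ultimately have "take e xs @ (drop e xs @ ys) \<in> game_product lss F r s e X Y"
    unfolding game_product_def using lx ee
    by (intro CollectI exI[of _ "take e xs"] exI[of _ "drop e xs @ ys"]) simp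
  moreover have "take e xs @ (drop e xs @ ys) = a" unfolding a by (metis append_assoc append_take_drop_id)
  ultimately show "a \<in> S" using SP by auto
qed

lemma chain_mono:
  assumes st: "\<forall>k. a \<le> k \<and> Suc k < b \<longrightarrow> (f k :: 'a::order) < f (Suc k)"
  shows "a \<le> k \<Longrightarrow> k < k' \<Longrightarrow> k' < b \<Longrightarrow> f k < f k'"
proof (induction k')
  case 0 thus ?case by simp
next
  case (Suc k')
  show ?case
  proof (cases "k = k'")
    case True thus ?thesis using st Suc.prems by auto
  next
    case False
    hence "f k < f k'" using Suc by auto
    also have "f k' < f (Suc k')" using st Suc.prems False by auto
    finally show ?thesis .
  qed
qed

lemma game_product_holds:
  assumes irr: "\<forall>x. \<not> lss x x" and trn: "\<forall>x y z. lss x y \<longrightarrow> lss y z \<longrightarrow> lss x z"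
    and r: "0 < r" and e': "1 \<le> e'"
    and adm: "\<forall>\<sigma>\<in>set \<sigma>s. admissible ar r s e' \<sigma>"
    and cl: "\<forall>\<sigma>\<in>set \<sigma>s. (length (lhs_cols \<sigma>), sent_colour fI lss e' P \<sigma>) \<in> set cl"
    and P: "{p. length p = e' - 1 \<and> (\<forall>k<e' - 1. p!k \<in> incr lss r (X k))} \<subseteq> P"
    and last: "constant_colours cl (X (e' - 1)) \<gamma>s" and tail: "\<forall>i. constant_colours cl (Y i) \<gamma>s"
    and levels: "\<forall>i\<in>{i. i \<noteq> kzero}. Y i \<subseteq> {a. F a = T i}" and T: "inj_on T {i. i \<noteq> kzero}"
    and a: "a \<in> game_product lss F r s e' X Y"
  shows "\<forall>\<sigma>\<in>set \<sigma>s. holds fI lss a \<sigma>"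
proof
  fix \<sigma> assume \<sigma>: "\<sigma> \<in> set \<sigma>s"
  have g: "admissible ar r s e' \<sigma>" using adm \<sigma> by blast
  note sp = admissible_bounds[OF g]
  obtain xs ys where a: "a = xs @ ys" and lx: "length xs = e'" and xk: "\<forall>k<e'. xs!k \<in> incr lss r (X k)"
    and ys: "ys \<in> Fseqs lss F r (s - e') (\<Union>i\<in>{i. i \<noteq> kzero}. Y i)"
    using a unfolding game_product_def by blast
  have ly: "length ys = s - e'" using ys unfolding Fseqs_def by auto
  let ?p = "take (e'-1) a"
  have "?p \<in> P"
    using P xk a lx by (auto simp: nth_append)
  moreover have bX: "a!(e'-1) \<in> incr lss r (X (e' - 1))"
    using xk a lx e' by (simp add: nth_append)
  moreover obtain H where H: "constant_colours cl H \<gamma>s" "a!(rhs_block \<sigma> - 1) \<in> incr lss r H"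
  proof (cases "rhs_block \<sigma> = e'")
    case True thus ?thesis using that last bX by auto
  next
    case False
    hence u: "e' \<le> rhs_block \<sigma> - 1" "rhs_block \<sigma> - 1 < s" using sp(6,7) e' by auto
    hence "a!(rhs_block \<sigma> - 1) = ys!(rhs_block \<sigma> - 1 - e')" using a lx by (simp add: nth_append)
    moreover have "ys!(rhs_block \<sigma> - 1 - e') \<in> set ys" using u ly by simp
    ultimately have "a!(rhs_block \<sigma> - 1) \<in> set ys" by simp
    then obtain i where "a!(rhs_block \<sigma> - 1) \<in> incr lss r (Y i)"
      using Fseqs_block_in_level[OF ys _ r levels T] by blast
    thus ?thesis using that tail by blast
  qed
  ultimately have "lss (sent_val fI \<sigma> ?p (map (nth (a!(e'-1))) (lhs_cols \<sigma>))) (bound_const e' \<sigma> ?p) \<longrightarrow>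
       sent_val fI \<sigma> ?p (map (nth (a!(e'-1))) (lhs_cols \<sigma>)) =
       sent_val fI \<sigma> ?p (map (nth (a!(rhs_block \<sigma> - 1))) (rhs_cols \<sigma>))"
    using sent_val_eq_if_constant_colours[OF irr trn g last H(1)] cl \<sigma> by blast
  thus "holds fI lss a \<sigma>" using holds_iff_sent_val[OF g] by blast
qed

lemma extended_levels_increasing:
  fixes Bt :: "nat \<Rightarrow> 'k::wellorder" and T R :: "'k \<Rightarrow> 'k" and \<iota>k :: "nat \<Rightarrow> 'k"
  assumes e: "1 \<le> e" "e < e'"
    and Bt: "\<forall>k. Suc k < e \<longrightarrow> Bt k < Bt (Suc k)" "Bt (e-1) = T kzero" and T: "strict_mono T"
    and \<iota>: "\<iota>k (e-1) = kzero" "\<forall>k. e \<le> k \<and> k < e' \<longrightarrow> \<iota>k (k-1) < \<iota>k k" and R: "\<iota>k (e'-2) < R kzero"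
    and beta: "\<forall>k. beta' k = (if Suc k < e' then if Suc k < e then Bt k else T (\<iota>k k) else T (R kzero))"
  shows "\<forall>k. Suc k < e' \<longrightarrow> beta' k < beta' (Suc k)"
proof (intro allI impI)
  fix k assume k: "Suc k < e'"
  show "beta' k < beta' (Suc k)"
  proof (cases "Suc (Suc k) < e")
    case True thus ?thesis using Bt(1) beta k e by simp
  next
    case False
    show ?thesis
    proof (cases "Suc k < e")
      case True
      hence "Suc k = e - 1" using False by simp
      hence "beta' (Suc k) = Bt (Suc k)" using beta e Bt(2) \<iota>(1) by simp
      moreover have "beta' k = Bt k" using beta True e by simp
      ultimately show ?thesis using Bt(1) True by simp
    next
      case not_lower: False
      hence "T (\<iota>k k) < T (\<iota>k (Suc k))"
        using \<iota>(2)[rule_format, of "Suc k"] k T by (simp add: strict_mono_less)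
      moreover have "T (\<iota>k (e' - 2)) < T (R kzero)" using R T by (simp add: strict_mono_less)
      moreover have "Suc (Suc k) < e' \<or> e' = Suc (Suc k)" using k by auto
      ultimately show ?thesis using beta k not_lower by auto
    qed
  qed
qed

definition early_moves :: "nat \<Rightarrow> ('k list \<Rightarrow> 'k) \<Rightarrow> ('k list \<Rightarrow> 'k \<Rightarrow> 'k::wellorder) \<Rightarrow> 'k list \<Rightarrow> nat \<Rightarrow> 'k" where
  "early_moves e st fin mus k = (if Suc k < e then st (take (Suc k) mus) else fin mus kzero)"

text \<open>The chain \<open>M\<^sub>i\<close> abstracted: \<open>lss\<close> is \<open><\<close>, \<open>Lv i\<close> is \<open>M\<^sub>i\<close> and \<open>F\<close> the level function.\<close>

locale theta_chain = inaccessible tk for tk :: "'k::wellorder itself" +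
  fixes lss :: "'m \<Rightarrow> 'm \<Rightarrow> bool" and F :: "'m \<Rightarrow> 'k" and Lv :: "'k \<Rightarrow> 'm set"
  assumes irr: "\<forall>x. \<not> lss x x" and trn: "\<forall>x y z. lss x y \<longrightarrow> lss y z \<longrightarrow> lss x z"
    and small_Lv: "\<forall>i. small (Lv i)" and in_Lv: "\<forall>a. a \<in> Lv (F a)"
    and below_in_Lv: "\<forall>v c. lss v c \<longrightarrow> v \<in> Lv (F c)"
begin

lemma small_level: "X \<subseteq> {a. F a = \<beta>} \<Longrightarrow> small X"
  using in_Lv small_Lv small_subset[of X "Lv \<beta>"] by blast

lemma extended_play_wins:
  fixes T :: "'k \<Rightarrow> 'k" and Bt :: "nat \<Rightarrow> 'k" and X :: "nat \<Rightarrow> 'm set" and Y :: "'k \<Rightarrow> 'm set"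
    and \<iota>k :: "nat \<Rightarrow> 'k" and Xmid :: "nat \<Rightarrow> 'm set" and R :: "'k \<Rightarrow> 'k" and Xf :: "'m set"
    and Yt :: "'k \<Rightarrow> 'm set" and beta' :: "nat \<Rightarrow> 'k" and mus' :: "'k list"
  assumes r: "0 < r" and e: "1 \<le> e" "e < e'" "e' \<le> s"
    and sig: "\<forall>\<sigma>\<in>set \<sigma>s. admissible ar r s e' \<sigma>"
    and Bmono: "\<forall>k. Suc k < e \<longrightarrow> Bt k < Bt (Suc k)" and Be: "Bt (e-1) = T kzero" and Tm: "strict_mono T"
    and Xs: "\<forall>k<e. X k \<subseteq> {a. F a = Bt k} \<and> |X k| =o |{..<mus'!k}|"
    and Ys: "\<forall>i. i \<noteq> kzero \<longrightarrow> Y i \<subseteq> {a. F a = T i}"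
    and SP: "game_product lss F r s e X Y \<subseteq> S"
    and \<iota>0: "\<iota>k (e-1) = kzero" and \<iota>s: "\<forall>k. e \<le> k \<and> k < e' \<longrightarrow> \<iota>k (k-1) < \<iota>k k"
    and Xm: "\<forall>k. e \<le> k \<and> k < e'-1 \<longrightarrow> Xmid k \<subseteq> Y (\<iota>k k) \<and> |Xmid k| =o |{..<mus'!k}|"
    and P: "{p. length p = e'-1 \<and> (\<forall>k<e'-1. p!k \<in> incr lss r (if k < e then X k else Xmid k))} \<subseteq> P"
    and cl: "\<forall>\<sigma>\<in>set \<sigma>s. (length (lhs_cols \<sigma>), sent_colour fI lss e' P \<sigma>) \<in> set cl"
    and R: "strict_mono R" "\<iota>k (e'-2) < R kzero"
    and Xf: "Xf \<subseteq> Y (R kzero)" "|Xf| =o |{..<mus'!(e'-1)}|"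
    and Yt: "\<forall>i. Yt i \<subseteq> Y (R i)" "\<forall>m::'k. \<exists>i. i \<noteq> kzero \<and> |{..<m}| \<le>o |Yt i|"
    and hc: "constant_colours cl Xf \<gamma>s" "\<forall>i. constant_colours cl (Yt i) \<gamma>s"
    and bdef: "\<forall>k. beta' k = (if Suc k < e' then if Suc k < e then Bt k else T (\<iota>k k) else T (R kzero))"
  shows "game_win lss F r s e' {a\<in>S. \<forall>\<sigma>\<in>set \<sigma>s. holds fI lss a \<sigma>} mus' beta' (T \<circ> R)"
proof -
  have \<iota>step: "\<forall>k. e-1 \<le> k \<and> Suc k < e' \<longrightarrow> \<iota>k k < \<iota>k (Suc k)"
  proof (intro allI impI)
    fix k assume k: "e-1 \<le> k \<and> Suc k < e'"
    hence "e \<le> Suc k \<and> Suc k < e'" using e by auto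
    hence "\<iota>k (Suc k - 1) < \<iota>k (Suc k)" using \<iota>s by blast
    thus "\<iota>k k < \<iota>k (Suc k)" by simp
  qed
  have \<iota>nz: "\<iota>k k \<noteq> kzero" if "e \<le> k" "k < e'" for k
  proof -
    have "\<iota>k (e-1) < \<iota>k k" using chain_mono[OF \<iota>step, of "e-1" k] that e by auto
    thus ?thesis using \<iota>0 by auto
  qed
  have Rnz: "R i \<noteq> kzero" for i
  proof -
    have "kzero \<le> \<iota>k (e'-2)" by (rule kzero_le)
    also have "\<iota>k (e'-2) < R kzero" by (rule R(2))
    also have "R kzero \<le> R i" using R(1) kzero_le[of i] by (metis strict_mono_less_eq)
    finally show ?thesis by simp
  qed
  have Rgt: "R kzero < R i" if "i \<noteq> kzero" for i
  proof -
    have "kzero < i" using that kzero_le[of i] by auto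
    thus ?thesis using R(1) by (simp add: strict_mono_less)
  qed
  have betl: "beta' (e'-1) = T (R kzero)" using bdef e by simp
  have betstep: "\<forall>k. 0 \<le> k \<and> Suc k < e' \<longrightarrow> beta' k < beta' (Suc k)"
    using extended_levels_increasing[where T=T and \<iota>k=\<iota>k and R=R, OF e(1,2) Bmono Be Tm \<iota>0 \<iota>s R(2) bdef]
    by simp
  have bet: "beta' k = (if Suc k < e then Bt k else T (\<iota>k k))" if "Suc k < e'" for k
    using bdef that by simp
  have betmono: "beta' k < beta' k'" if "k < k'" "k' < e'" for k k'
    using chain_mono[OF betstep, of k k'] that by simp
  define X' where "X' = (\<lambda>k. if k < e'-1 then (if k < e then X k else Xmid k) else Xf)"
  have X'F: "X' k \<subseteq> {a. F a = beta' k}" if "k < e'" for k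
  proof (cases "k < e'-1")
    case True
    show ?thesis
    proof (cases "k < e")
      case True
      have "beta' k = Bt k"
      proof (cases "Suc k < e")
        case True thus ?thesis using bet[of k] \<open>k < e'-1\<close> by simp
      next
        case False
        hence ke: "k = e-1" using \<open>k<e\<close> by simp
        have "beta' k = T (\<iota>k k)" using bet[of k] \<open>k < e'-1\<close> False by simp
        also have "\<dots> = Bt k" using ke \<iota>0 Be by simp
        finally show ?thesis .
      qed
      thus ?thesis unfolding X'_def using Xs \<open>k<e\<close> \<open>k < e'-1\<close> by simp
    next
      case False
      have "beta' k = T (\<iota>k k)" using bet[of k] \<open>k < e'-1\<close> False by simp
      moreover have "Xmid k \<subseteq> Y (\<iota>k k)" using Xm False \<open>k < e'-1\<close> by simp
      moreover have "Y (\<iota>k k) \<subseteq> {a. F a = T (\<iota>k k)}" using Ys \<iota>nz[of k] False that by simp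
      ultimately show ?thesis unfolding X'_def using False \<open>k < e'-1\<close> by auto
    qed
  next
    case False
    hence "k = e'-1" using that by simp
    moreover have "Y (R kzero) \<subseteq> {a. F a = T (R kzero)}" using Ys Rnz by simp
    ultimately show ?thesis unfolding X'_def using Xf(1) betl by auto
  qed
  have X'c: "|X' k| =o |{..<mus'!k}|" if "k < e'" for k
  proof (cases "k < e'-1")
    case True thus ?thesis unfolding X'_def using Xs Xm that by (cases "k < e") auto
  next
    case False
    hence "k = e'-1" using that by simp
    thus ?thesis unfolding X'_def using Xf(2) by simp
  qed
  have X'U: "X' k \<subseteq> (\<Union>i\<in>{i. i \<noteq> kzero}. Y i)" if "e \<le> k" "k < e'" for k
  proof (cases "k < e'-1")
    case True
    hence "X' k \<subseteq> Y (\<iota>k k)" unfolding X'_def using Xm that by simp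
    thus ?thesis using \<iota>nz[OF that] by blast
  next
    case False
    hence "X' k \<subseteq> Y (R kzero)" unfolding X'_def using Xf by simp
    thus ?thesis using Rnz by blast
  qed
  have YtF: "Yt i \<subseteq> {a. F a = (T \<circ> R) i}" for i
    using Yt(1)[rule_format, of i] Ys Rnz[of i] by auto
  have YtU: "Yt i \<subseteq> (\<Union>i\<in>{i. i \<noteq> kzero}. Y i)" for i
    using Yt(1)[rule_format, of i] Rnz[of i] by blast
  have TR: "strict_mono (T \<circ> R)" using Tm R(1) by (simp add: strict_mono_def)
  have "game_product lss F r s e' X' Yt \<subseteq> S"
  proof (rule game_product_shift[OF SP r e(2,3)])
    show "\<forall>k<e. X' k = X k" unfolding X'_def using e by auto
    show "\<forall>k. e \<le> k \<and> k < e' \<longrightarrow> X' k \<subseteq> (\<Union>i\<in>{i. i \<noteq> kzero}. Y i) \<and> X' k \<subseteq> {a. F a = beta' k}"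
      using X'U X'F by blast
    show "\<forall>k k'. e \<le> k \<and> k < k' \<and> k' < e' \<longrightarrow> beta' k < beta' k'" using betmono by blast
    show "\<forall>i. i \<noteq> kzero \<longrightarrow> Yt i \<subseteq> (\<Union>i\<in>{i. i \<noteq> kzero}. Y i) \<and> Yt i \<subseteq> {a. F a = (T \<circ> R) i}"
      using YtU YtF by blast
    show "\<forall>i. i \<noteq> kzero \<longrightarrow> beta' (e' - 1) < (T \<circ> R) i"
      using betl Rgt Tm by (simp add: strict_mono_less)
  qed
  moreover have "\<forall>\<sigma>\<in>set \<sigma>s. holds fI lss a \<sigma>" if "a \<in> game_product lss F r s e' X' Yt" for a
  proof (rule game_product_holds[OF irr trn r _ sig cl _ _ hc(2) _ _ that])
    show "1 \<le> e'" using e by simp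
    show "{p. length p = e' - 1 \<and> (\<forall>k<e' - 1. p ! k \<in> incr lss r (X' k))} \<subseteq> P"
      using P unfolding X'_def by auto
    show "constant_colours cl (X' (e' - 1)) \<gamma>s" unfolding X'_def using hc(1) by simp
    show "\<forall>i\<in>{i. i \<noteq> kzero}. Yt i \<subseteq> {a. F a = (T \<circ> R) i}" using YtF by blast
    show "inj_on (T \<circ> R) {i. i \<noteq> kzero}" using TR by (rule strict_mono_imp_inj_on)
  qed
  ultimately show ?thesis
    unfolding game_win_iff using betstep betl TR X'F X'c YtF Yt(2) by (intro conjI exI[of _ X'] exI[of _ Yt]) auto
qed

lemma II_wins_witnesses:
  assumes "II_wins lss F r s e S"
  obtains st fin X Y where
    "\<And>mus. length mus = e \<Longrightarrow> \<forall>k. Suc k < e \<longrightarrow> early_moves e st fin mus k < early_moves e st fin mus (Suc k)"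
    "\<And>mus. length mus = e \<Longrightarrow> strict_mono (fin mus)"
    "\<And>mus k. length mus = e \<Longrightarrow> k < e \<Longrightarrow>
       X mus k \<subseteq> {a. F a = early_moves e st fin mus k} \<and> |X mus k| =o |{..<mus!k}|"
    "\<And>mus i. length mus = e \<Longrightarrow> i \<noteq> kzero \<Longrightarrow> Y mus i \<subseteq> {a. F a = fin mus i}"
    "\<And>mus. length mus = e \<Longrightarrow> cofinally_large (Y mus)"
    "\<And>mus. length mus = e \<Longrightarrow> game_product lss F r s e (X mus) (Y mus) \<subseteq> S"
proof -
  obtain st fin where win: "\<forall>mus. length mus = e \<longrightarrow>
      game_win lss F r s e S mus (early_moves e st fin mus) (fin mus)"
    using assms unfolding II_wins_def early_moves_def by blast
  let ?good = "\<lambda>mus X Y. (\<forall>k<e. X k \<subseteq> {a. F a = early_moves e st fin mus k} \<and> |X k| =o |{..<mus!k}| ) \<and>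
      (\<forall>i. i \<noteq> kzero \<longrightarrow> Y i \<subseteq> {a. F a = fin mus i}) \<and>
      (\<forall>m::'k. \<exists>i. i \<noteq> kzero \<and> |{..<m}| \<le>o |Y i| ) \<and> game_product lss F r s e X Y \<subseteq> S"
  have "\<exists>X Y. length mus = e \<longrightarrow> ?good mus X Y" for mus
  proof (cases "length mus = e")
    case True
    thus ?thesis using win[rule_format, OF True] unfolding game_win_iff by blast
  qed blast
  then obtain X where "\<forall>mus. \<exists>Y. length mus = e \<longrightarrow> ?good mus (X mus) Y"
    by (metis choice)
  then obtain Y0 where XY: "\<forall>mus. length mus = e \<longrightarrow> ?good mus (X mus) (Y0 mus)"
    by (rule choice[THEN exE])
  define Y where "Y mus i = (if i = kzero then {} else Y0 mus i)" for mus i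
  have product: "game_product lss F r s e (X mus) (Y mus) = game_product lss F r s e (X mus) (Y0 mus)" for mus
    unfolding game_product_def Y_def by auto
  show ?thesis
  proof (rule that)
    fix mus :: "'k list" assume mus: "length mus = e"
    note good = XY[rule_format, OF mus]
    show "\<forall>k. Suc k < e \<longrightarrow> early_moves e st fin mus k < early_moves e st fin mus (Suc k)"
      "strict_mono (fin mus)"
      using win[rule_format, OF mus] unfolding game_win_iff by blast+
    show "X mus k \<subseteq> {a. F a = early_moves e st fin mus k} \<and> |X mus k| =o |{..<mus!k}|" if "k < e" for k
      using good that by blast
    show "Y mus i \<subseteq> {a. F a = fin mus i}" if "i \<noteq> kzero" for i
      using good that unfolding Y_def by simp
    show "game_product lss F r s e (X mus) (Y mus) \<subseteq> S"
      using good unfolding product by blast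
    show "cofinally_large (Y mus)"
    proof (rule cofinally_largeI)
      show "\<forall>i. small (Y mus i)"
        using good small_level small_finite[of "{}"] unfolding Y_def by auto
      show "\<forall>\<mu>::'k. \<exists>i. |{..<\<mu>}| \<le>o |Y mus i|"
      proof
        fix \<mu> :: 'k
        obtain i where "i \<noteq> kzero" "|{..<\<mu>}| \<le>o |Y0 mus i|" using good by blast
        thus "\<exists>i. |{..<\<mu>}| \<le>o |Y mus i|" unfolding Y_def by auto
      qed
    qed
  qed
qed

lemma small_sent_colours:
  assumes adm: "\<forall>\<sigma>\<in>set \<sigma>s. admissible ar r s e' \<sigma>" and e': "2 \<le> e'"
    and Z: "\<forall>k<e'-1. small (Z k)"
  defines "P \<equiv> {p. length p = e'-1 \<and> (\<forall>k<e'-1. p!k \<in> incr lss r (Z k))}"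
  shows "\<exists>CS. small CS \<and>
    (\<forall>mc\<in>set (map (\<lambda>\<sigma>. (length (lhs_cols \<sigma>), sent_colour fI lss e' P \<sigma>)) \<sigma>s). range (snd mc) \<subseteq> CS)"
proof (intro exI conjI)
  define W where "W = (\<Union>k\<in>{..<e'-1}. Z k)"
  define V where "V = (\<Union>x\<in>W. Lv (F x))"
  have "small W" unfolding W_def using Z by (intro small_UN) (auto intro: small_finite)
  hence "small V" unfolding V_def using small_Lv by (intro small_UN) auto
  have "P \<subseteq> {ps. length ps = e'-1 \<and> set ps \<subseteq> {xs. length xs = r \<and> set xs \<subseteq> W}}"
    unfolding P_def W_def incr_def by (force simp: in_set_conv_nth)
  hence "small P" using small_lists[OF small_lists[OF \<open>small W\<close>]] by (rule small_subset)
  show "small {f. \<forall>p. f p \<noteq> None \<longrightarrow> p \<in> P \<and> the (f p) \<in> V}"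
    by (rule small_partial_funs[OF \<open>small P\<close> \<open>small V\<close>])
  show "\<forall>mc\<in>set (map (\<lambda>\<sigma>. (length (lhs_cols \<sigma>), sent_colour fI lss e' P \<sigma>)) \<sigma>s).
      range (snd mc) \<subseteq> {f. \<forall>p. f p \<noteq> None \<longrightarrow> p \<in> P \<and> the (f p) \<in> V}"
  proof (clarsimp)
    fix \<sigma> z p y assume \<sigma>: "\<sigma> \<in> set \<sigma>s" and y: "sent_colour fI lss e' P \<sigma> z p = Some y"
    hence p: "p \<in> P" and lt: "lss y (bound_const e' \<sigma> p)"
      unfolding sent_colour_def by (auto split: if_splits)
    note sp = admissible_bounds[OF adm[rule_format, OF \<sigma>]]
    have "e'-2 < e'-1" using e' by simp
    hence "p!(e'-2) \<in> incr lss r (Z (e'-2))" using p unfolding P_def by auto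
    moreover have "bound_const e' \<sigma> p = p!(e'-2)!(bound_col \<sigma> - 1)"
      unfolding bound_const_def aval_def by (simp add: numeral_2_eq_2)
    moreover have "bound_col \<sigma> - 1 < r" using sp(8,9) by simp
    ultimately have "bound_const e' \<sigma> p \<in> Z (e'-2)"
      unfolding incr_def using nth_mem by fastforce
    hence "bound_const e' \<sigma> p \<in> W" unfolding W_def using \<open>e'-2 < e'-1\<close> by blast
    moreover have "y \<in> Lv (F (bound_const e' \<sigma> p))" using below_in_Lv lt by blast
    ultimately show "p \<in> P \<and> y \<in> V" using p unfolding V_def by blast
  qed
qed

theorem superlarge_extend:
  assumes S: "superlarge lss F r s e S" and r: "0 < r" and e: "1 \<le> e" "e < e'" "e' \<le> s"
    and sig: "\<forall>\<sigma>\<in>set \<sigma>s. admissible ar r s e' \<sigma>"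
  shows "superlarge lss F r s e' {a\<in>S. \<forall>\<sigma>\<in>set \<sigma>s. holds fI lss a \<sigma>}"
proof -
  define S' where "S' = {a\<in>S. \<forall>\<sigma>\<in>set \<sigma>s. holds fI lss a \<sigma>}"
  have "II_wins lss F r s e S" using S unfolding superlarge_def by blast
  then obtain st :: "'k list \<Rightarrow> 'k" and fin :: "'k list \<Rightarrow> 'k \<Rightarrow> 'k"
    and X :: "'k list \<Rightarrow> nat \<Rightarrow> 'm set" and Y :: "'k list \<Rightarrow> 'k \<Rightarrow> 'm set" where
    mono: "\<And>mus. length mus = e \<Longrightarrow> \<forall>k. Suc k < e \<longrightarrow> early_moves e st fin mus k < early_moves e st fin mus (Suc k)"
    and fin: "\<And>mus. length mus = e \<Longrightarrow> strict_mono (fin mus)"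
    and X: "\<And>mus k. length mus = e \<Longrightarrow> k < e \<Longrightarrow>
       X mus k \<subseteq> {a. F a = early_moves e st fin mus k} \<and> |X mus k| =o |{..<mus!k}|"
    and Y: "\<And>mus i. length mus = e \<Longrightarrow> i \<noteq> kzero \<Longrightarrow> Y mus i \<subseteq> {a. F a = fin mus i}"
    and cof: "\<And>mus. length mus = e \<Longrightarrow> cofinally_large (Y mus)"
    and product: "\<And>mus. length mus = e \<Longrightarrow> game_product lss F r s e (X mus) (Y mus) \<subseteq> S"
    by (rule II_wins_witnesses) blast
  \<comment> \<open>II answers \<open>\<mu>\<^sub>k\<close> for \<open>e < k < e'\<close> by the next level of the old tail large enough for it\<close>
  define nxt where "nxt mus b \<mu> = (LEAST i. b < i \<and> |{..<\<mu>}| \<le>o |Y mus i| )" for mus b and \<mu> :: 'k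
  have nxt: "b < nxt mus b \<mu> \<and> |{..<\<mu>}| \<le>o |Y mus (nxt mus b \<mu>)|" if "length mus = e" for mus b \<mu>
  proof -
    have "\<exists>i. b < i \<and> |{..<\<mu>}| \<le>o |Y mus i|" using cof[OF that] unfolding cofinally_large_def by blast
    thus ?thesis unfolding nxt_def by (rule LeastI_ex)
  qed
  define \<iota>f where "\<iota>f mus ms = foldl (nxt mus) kzero ms" for mus ms
  define st' where "st' l = (if length l < e then st l else fin (take e l) (\<iota>f (take e l) (drop e l)))" for l
  define \<iota>k where "\<iota>k mus' k = \<iota>f (take e mus') (take (Suc k - e) (drop e mus'))" for mus' k
  define Xmid where "Xmid mus' k = (SOME Z. Z \<subseteq> Y (take e mus') (\<iota>k mus' k) \<and> |Z| =o |{..<mus'!k}| )" for mus' k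
  define Xpre where "Xpre mus' k = (if k < e then X (take e mus') k else Xmid mus' k)" for mus' k
  define Pf where "Pf mus' = {p. length p = e'-1 \<and> (\<forall>k<e'-1. p!k \<in> incr lss r (Xpre mus' k))}" for mus'
  define clf where "clf mus' = map (\<lambda>\<sigma>. (length (lhs_cols \<sigma>), sent_colour fI lss e' (Pf mus') \<sigma>)) \<sigma>s" for mus'
  define FP where "FP mus' R \<longleftrightarrow> (\<exists>Xf Yt \<gamma>s. strict_mono R \<and> \<iota>k mus' (e'-2) < R kzero \<and>
     Xf \<subseteq> Y (take e mus') (R kzero) \<and> |Xf| =o |{..<mus'!(e'-1)}| \<and>
     (\<forall>i. Yt i \<subseteq> Y (take e mus') (R i)) \<and> (\<forall>m::'k. \<exists>i. i \<noteq> kzero \<and> |{..<m}| \<le>o |Yt i| ) \<and>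
     constant_colours (clf mus') Xf \<gamma>s \<and> (\<forall>i. constant_colours (clf mus') (Yt i) \<gamma>s))"
    for mus' and R :: "'k \<Rightarrow> 'k"
  define fin' where "fin' mus' = fin (take e mus') \<circ> (SOME R. FP mus' R)" for mus'
  have "II_wins lss F r s e' S'"
    unfolding II_wins_def
  proof (intro exI[of _ st'] exI[of _ fin'] allI impI)
    fix mus' :: "'k list" assume lm: "length mus' = e'"
    define mu where "mu = take e mus'"
    have lmu: "length mu = e" unfolding mu_def using lm e by simp
    have stv: "st' (take (Suc k) mus') = (if Suc k < e then early_moves e st fin mu k else fin mu (\<iota>k mus' k))"
      if "Suc k < e'" for k
    proof (cases "Suc k < e")
      case True
      have "take (Suc k) mu = take (Suc k) mus'" unfolding mu_def using True by (simp add: min_def)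
      thus ?thesis unfolding st'_def early_moves_def using True that lm by simp
    next
      case False
      have "take e (take (Suc k) mus') = mu" unfolding mu_def using False by (simp add: min_def)
      moreover have "drop e (take (Suc k) mus') = take (Suc k - e) (drop e mus')"
        by (simp add: drop_take)
      ultimately show ?thesis unfolding st'_def \<iota>k_def using False that lm by (simp add: mu_def)
    qed
    have \<iota>0: "\<iota>k mus' (e-1) = kzero" unfolding \<iota>k_def \<iota>f_def using e by simp
    have \<iota>s: "\<iota>k mus' (k-1) < \<iota>k mus' k \<and> |{..<mus'!k}| \<le>o |Y mu (\<iota>k mus' k)|"
      if "e \<le> k" "k < e'" for k
    proof -
      have kl: "k - e < length (drop e mus')" using that lm by simp
      have "take (Suc k - e) (drop e mus') = take (k - e) (drop e mus') @ [drop e mus' ! (k - e)]"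
        using take_Suc_conv_app_nth[OF kl] that by (simp add: Suc_diff_le)
      moreover have "drop e mus' ! (k - e) = mus'!k" using that lm by simp
      moreover have "Suc (k-1) - e = k - e" using that e by simp
      ultimately have "\<iota>k mus' k = nxt mu (\<iota>k mus' (k-1)) (mus'!k)"
        unfolding \<iota>k_def \<iota>f_def mu_def by simp
      thus ?thesis using nxt[OF lmu] by simp
    qed
    have Xm: "Xmid mus' k \<subseteq> Y mu (\<iota>k mus' k) \<and> |Xmid mus' k| =o |{..<mus'!k}|"
      if "e \<le> k" "k < e'-1" for k
    proof -
      have "|{..<mus'!k}| \<le>o |Y mu (\<iota>k mus' k)|" using \<iota>s[of k] that by simp
      hence "\<exists>Z. Z \<subseteq> Y mu (\<iota>k mus' k) \<and> |Z| =o |{..<mus'!k}|" by (rule ordLeq_imp_ordIso_subset)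
      thus ?thesis unfolding Xmid_def mu_def[symmetric] by (rule someI_ex)
    qed
    have "\<forall>k<e'-1. small (Xpre mus' k)"
    proof (intro allI impI)
      fix k assume "k < e'-1"
      show "small (Xpre mus' k)"
      proof (cases "k < e")
        case True
        hence "X mu k \<subseteq> {a. F a = early_moves e st fin mu k}" using X[OF lmu] by blast
        thus ?thesis unfolding Xpre_def mu_def[symmetric] using True by (simp add: small_level)
      next
        case False
        hence "\<iota>k mus' (k-1) < \<iota>k mus' k" using \<iota>s[of k] \<open>k < e'-1\<close> by simp
        hence "\<iota>k mus' k \<noteq> kzero" using kzero_le[of "\<iota>k mus' (k-1)"] by auto
        hence "Y mu (\<iota>k mus' k) \<subseteq> {a. F a = fin mu (\<iota>k mus' k)}" by (rule Y[OF lmu])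
        hence "small (Y mu (\<iota>k mus' k))" by (rule small_level)
        have "Xmid mus' k \<subseteq> Y mu (\<iota>k mus' k)" using Xm False \<open>k < e'-1\<close> by simp
        hence "small (Xmid mus' k)" using \<open>small (Y mu (\<iota>k mus' k))\<close> by (rule small_subset)
        thus ?thesis unfolding Xpre_def using False by simp
      qed
    qed
    moreover have "2 \<le> e'" using e by simp
    ultimately obtain CS where CS: "small CS" "\<forall>mc\<in>set (clf mus'). range (snd mc) \<subseteq> CS"
      using small_sent_colours[OF sig, where fI = fI] unfolding clf_def Pf_def by blast
    obtain R0 :: "'k \<Rightarrow> 'k" and Xf0 Yt0 \<gamma>s0 where "strict_mono R0 \<and> \<iota>k mus' (e'-2) < R0 kzero \<and>
       Xf0 \<subseteq> Y mu (R0 kzero) \<and> |Xf0| =o |{..<mus'!(e'-1)}| \<and> (\<forall>i. Yt0 i \<subseteq> Y mu (R0 i)) \<and>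
       (\<forall>m::'k. \<exists>i. i \<noteq> kzero \<and> |{..<m}| \<le>o |Yt0 i| ) \<and>
       constant_colours (clf mus') Xf0 \<gamma>s0 \<and> (\<forall>i. constant_colours (clf mus') (Yt0 i) \<gamma>s0)"
      using cofinally_large_homogeneous_tail[OF cof[OF lmu] CS, of "\<iota>k mus' (e'-2)" "mus'!(e'-1)"]
      by (elim exE)
    hence "FP mus' R0" unfolding FP_def mu_def by blast
    hence "FP mus' (SOME R. FP mus' R)" by (rule someI[of "FP mus'"])
    then obtain Xf Yt \<gamma>s where final: "strict_mono (SOME R. FP mus' R)" "\<iota>k mus' (e'-2) < (SOME R. FP mus' R) kzero"
      "Xf \<subseteq> Y mu ((SOME R. FP mus' R) kzero)" "|Xf| =o |{..<mus'!(e'-1)}|"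
      "\<forall>i. Yt i \<subseteq> Y mu ((SOME R. FP mus' R) i)" "\<forall>m::'k. \<exists>i. i \<noteq> kzero \<and> |{..<m}| \<le>o |Yt i|"
      "constant_colours (clf mus') Xf \<gamma>s" "\<forall>i. constant_colours (clf mus') (Yt i) \<gamma>s"
      unfolding FP_def mu_def by blast
    show "game_win lss F r s e' S' mus'
          (\<lambda>k. if Suc k < e' then st' (take (Suc k) mus') else fin' mus' kzero) (fin' mus')"
      unfolding S'_def fin'_def mu_def[symmetric]
    proof (rule extended_play_wins[where Bt = "early_moves e st fin mu" and X = "X mu" and Y = "Y mu"
          and \<iota>k = "\<iota>k mus'" and Xmid = "Xmid mus'" and P = "Pf mus'" and cl = "clf mus'"])
      show "\<forall>k. Suc k < e \<longrightarrow> early_moves e st fin mu k < early_moves e st fin mu (Suc k)"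
        by (rule mono[OF lmu])
      show "early_moves e st fin mu (e - 1) = fin mu kzero" unfolding early_moves_def using e by simp
      show "\<forall>k<e. X mu k \<subseteq> {a. F a = early_moves e st fin mu k} \<and> |X mu k| =o |{..<mus' ! k}|"
        using X[OF lmu] unfolding mu_def by simp
      show "{p. length p = e' - 1 \<and> (\<forall>k<e' - 1. p ! k \<in> incr lss r (if k < e then X mu k else Xmid mus' k))}
          \<subseteq> Pf mus'"
        unfolding Pf_def Xpre_def mu_def by simp
      show "\<forall>\<sigma>\<in>set \<sigma>s. (length (lhs_cols \<sigma>), sent_colour fI lss e' (Pf mus') \<sigma>) \<in> set (clf mus')"
        unfolding clf_def by simp
      show "\<forall>k. (if Suc k < e' then st' (take (Suc k) mus') else (fin mu \<circ> (SOME R. FP mus' R)) kzero) =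
          (if Suc k < e' then if Suc k < e then early_moves e st fin mu k else fin mu (\<iota>k mus' k)
           else fin mu ((SOME R. FP mus' R) kzero))"
        using stv by simp
      show "0 < r" "1 \<le> e" "e < e'" "e' \<le> s" using r e by auto
      show "\<forall>\<sigma>\<in>set \<sigma>s. admissible ar r s e' \<sigma>" by (rule sig)
      show "strict_mono (fin mu)" by (rule fin[OF lmu])
      show "\<forall>i. i \<noteq> kzero \<longrightarrow> Y mu i \<subseteq> {a. F a = fin mu i}" using Y[OF lmu] by blast
      show "game_product lss F r s e (X mu) (Y mu) \<subseteq> S" by (rule product[OF lmu])
      show "\<iota>k mus' (e - 1) = kzero" by (rule \<iota>0)
      show "\<forall>k. e \<le> k \<and> k < e' \<longrightarrow> \<iota>k mus' (k - 1) < \<iota>k mus' k" using \<iota>s by blast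
      show "\<forall>k. e \<le> k \<and> k < e' - 1 \<longrightarrow> Xmid mus' k \<subseteq> Y mu (\<iota>k mus' k) \<and> |Xmid mus' k| =o |{..<mus' ! k}|"
        using Xm by blast
    qed (fact final)+
  qed
  moreover have "S' \<subseteq> Fseqs lss F r s UNIV" using S unfolding superlarge_def S'_def by blast
  ultimately show ?thesis unfolding superlarge_def S'_def using e by simp
qed

end

lemma setting_theta_chain:
  fixes Mi :: "'k::wellorder \<Rightarrow> 'm set"
  assumes "setting ar par isL sk lt fI pI Mi"
  shows "theta_chain TYPE('k) (lessM pI lt) (Fk Mi) Mi"
proof -
  note st = assms[unfolded setting_def]
  have inacc: "theta_inaccessible TYPE('k)" by (insert st, elim conjE, assumption)
  have irrefl: "\<forall>a. \<not> lessM pI lt a a" by (insert st, elim conjE, assumption)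
  have trans: "\<forall>a b c. lessM pI lt a b \<and> lessM pI lt b c \<longrightarrow> lessM pI lt a c"
    by (insert st, elim conjE, assumption)
  have initial_small: "\<forall>I. I \<noteq> UNIV \<and> downclosed (lessM pI lt) I \<longrightarrow> |I| <o |UNIV::'k set|"
    by (insert st, elim conjE, assumption)
  have Mi: "\<forall>i. Mi i \<noteq> UNIV \<and> downclosed (lessM pI lt) (Mi i)" by (insert st, elim conjE, assumption)
  have covers: "(\<Union>i. Mi i) = UNIV" by (insert st, elim conjE, assumption)
  have in_Fk: "a \<in> Mi (Fk Mi a)" for a
  proof -
    have "\<exists>i. a \<in> Mi i" using covers by blast
    thus ?thesis unfolding Fk_def by (rule LeastI_ex)
  qed
  show ?thesis
  proof (unfold_locales)
    show "theta_inaccessible TYPE('k)" by (rule inacc)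
    show "\<forall>x. \<not> lessM pI lt x x" by (rule irrefl)
    show "\<forall>x y z. lessM pI lt x y \<longrightarrow> lessM pI lt y z \<longrightarrow> lessM pI lt x z" using trans by blast
    show "\<forall>i. small_below TYPE('k) (Mi i)" unfolding small_below_def using initial_small Mi by blast
    show "\<forall>a. a \<in> Mi (Fk Mi a)" using in_Fk by blast
    show "\<forall>v c. lessM pI lt v c \<longrightarrow> v \<in> Mi (Fk Mi c)"
      using in_Fk Mi unfolding downclosed_def by blast
  qed
qed

theorem proposition3p5:
  fixes ar :: "'f \<Rightarrow> nat" and par :: "'p \<Rightarrow> nat" and isL :: "'f \<Rightarrow> bool"
    and sk :: "('f,'p) fm \<Rightarrow> nat \<Rightarrow> 'f" and lt :: 'p
    and fI :: "'f \<Rightarrow> 'm list \<Rightarrow> 'm" and pI :: "'p \<Rightarrow> 'm list \<Rightarrow> bool"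
    and Mi :: "'k::wellorder \<Rightarrow> 'm set"
    and r s e e' :: nat and S :: "'m list list set" and \<sigma>s :: "'f sent list"
  assumes setting: "setting ar par isL sk lt fI pI Mi"
    and r: "0 < r" and s: "0 < s" and e: "1 \<le> e" "e < s"
    and S: "superlarge (lessM pI lt) (Fk Mi) r s e S"
    and nonempty: "\<sigma>s \<noteq> []"
    and sig: "\<forall>\<sigma>\<in>set \<sigma>s. is_sigma ar \<sigma> \<and> iota \<sigma> = e' \<and>
                (\<forall>c\<in>sconsts \<sigma>. 1 \<le> fst c \<and> fst c \<le> s \<and> 1 \<le> snd c \<and> snd c \<le> r)"
    and e': "e < e'"
  shows "\<exists>S'\<subseteq>S. superlarge (lessM pI lt) (Fk Mi) r s e' S' \<and>
           (\<forall>a\<in>S'. \<forall>\<sigma>\<in>set \<sigma>s. holds fI (lessM pI lt) a \<sigma>)"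
proof -
  interpret theta_chain "TYPE('k)" "lessM pI lt" "Fk Mi" Mi
    using setting by (rule setting_theta_chain)
  have adm: "\<forall>\<sigma>\<in>set \<sigma>s. admissible ar r s e' \<sigma>" using sig unfolding admissible_def by blast
  obtain \<sigma> where "\<sigma> \<in> set \<sigma>s" using hd_in_set[OF nonempty] by blast
  hence "admissible ar r s e' \<sigma>" using adm by blast
  from admissible_bounds(6,7)[OF this] have "e' \<le> s" by (rule le_trans)
  hence "superlarge (lessM pI lt) (Fk Mi) r s e' {a\<in>S. \<forall>\<sigma>\<in>set \<sigma>s. holds fI (lessM pI lt) a \<sigma>}"
    by (rule superlarge_extend[OF S r e(1) e' _ adm])
  thus ?thesis by (intro exI[of _ "{a\<in>S. \<forall>\<sigma>\<in>set \<sigma>s. holds fI (lessM pI lt) a \<sigma>}"]) auto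
qed

end
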